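(* Let $F$ be an absolutely continuous distribution with support $(\underline{\theta}, \overline{\theta})$, $0 \le \underline{\theta} < \overline{\theta} \le \infty$, with density $f$ continuous and strictly positive on the support. Consider two families of two-player games in which each player $i\in\{1,2\}$ has a private type $\theta_i$ drawn independently from $F$ and chooses a stopping time $a_i \in [0,\infty]$. (AL game with parameter $\delta \in [0,1)$): payoffs are $\theta_i - (\delta a_{-i} + (1-\delta) a_i)$ if $a_i > a_{-i}$, $\theta_i/2 - a_i$ if $a_i = a_{-i}$, and $-a_i$ if $a_i < a_{-i}$. (Behavioral-types game with parameter $\epsilon \in (0,1)$): independently across players, each player is "crazy" with probability $\epsilon$ and "normal" with probability $1-\epsilon$. Crazy types have payoffs $\theta_i$, $\theta_i/2$, $0$ in the three cases above (no costs) and always choose $a_i=\infty$; normal types have payoffs $\theta_i - a_{-i}$ if $a_i > a_{-i}$, $\theta_i/2 - a_i$ if $a_i = a_{-i}$, $-a_i$ if $a_i < a_{-i}$, so a normal type $\theta_i$ choosing $a_i$ has expected payoff $(1-\epsilon)\big[\theta_i G_{-i}(a_i) - \int_0^{a_i}(1-G_{-i}(s))\,ds\big] - \epsilon a_i$, where $G_{-i}$ is the CDF of the normal opponent's stopping time. For an equilibrium (with normal-type strategies $\sigma_1,\sigma_2$ in the behavioral-types game), with the convention that only Player 1 may concede at zero with positive probability, let $\underline{\theta}_1 := \sup\{\theta:\sigma_1(\theta)=0\}$ and define the type-to-type function $k(\theta) := \sigma_2^{-1}(\sigma_1(\theta))$ on the set of Player 1 types with $\sigma_1(\theta)\in(0,\infty)$.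 Let $\mathcal{E}(\delta)$ be the set of equilibrium type-to-type functions of the AL game with parameter $\delta$, and $\mathcal{E}^{BT}(\epsilon)$ the set of equilibrium type-to-type functions (of normal types) of the behavioral-types game with parameter $\epsilon$. Then: (i) In the behavioral-types game with parameter $\epsilon$, the type-to-type function $k_\epsilon$ satisfies $$\frac{\partial k_\epsilon(\theta,\underline{\theta}_1)}{\partial\theta} = \frac{1-(1-\epsilon)F(k_\epsilon(\theta,\underline{\theta}_1))}{1-(1-\epsilon)F(\theta)}\cdot\frac{k_\epsilon(\theta,\underline{\theta}_1)\,f(\theta)}{\theta\, f(k_\epsilon(\theta,\underline{\theta}_1))},$$ which with $\delta = 1-\epsilon$ is identical to the corresponding ODE for the AL game with parameter $\delta$; the associated perturbed hazard potential is $\Lambda_\delta(\theta) = \int_{\theta^\circ}^{\theta} \frac{f(x)}{x(1-\delta F(x))}\,dx$ (for a fixed reference point $\theta^\circ$ in the support) with $\delta = 1-\epsilon$. (ii) For every $\delta\in(0,1)$ there is a bijection between $\mathcal{E}(\delta)$ and $\mathcal{E}^{BT}(1-\delta)$ preserving the type-to-type function; i.e. $\mathcal{E}(\delta) = \mathcal{E}^{BT}(1-\delta)$. (iii) Consequently $\limsup_{\delta\to 1^-}\mathcal{E}(\delta) = \limsup_{\epsilon\to 0^+}\mathcal{E}^{BT}(\epsilon)$, where outer limits are taken in the topology of uniform convergence on compact subsets of $(\underline{\theta},\overline{\theta})$.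
   Context: Equilibria are Bayesian Nash equilibria in pure strategies. The outer limit $\limsup_{\delta\to1^-}\mathcal{E}(\delta)$ is the set of all limits (in the topology of uniform convergence on compact subsets) of sequences $k_n\in\mathcal{E}(\delta_n)$ with $\delta_n\to1^-$; it is called the Amann–Leininger selection, and $\limsup_{\epsilon\to0^+}\mathcal{E}^{BT}(\epsilon)$ the behavioral-types selection. *)

theory Defs
  imports "HOL-Probability.Probability"
begin

definition supp :: "real \<Rightarrow> ereal \<Rightarrow> real set" where
  "supp lo hi = {x. lo < x \<and> ereal x < hi}"

definition distF :: "real \<Rightarrow> ereal \<Rightarrow> (real \<Rightarrow> real) \<Rightarrow> real measure" where
  "distF lo hi f = density lborel (\<lambda>x. indicator (supp lo hi) x * ennreal (f x))"

definition cdfF :: "real \<Rightarrow> ereal \<Rightarrow> (real \<Rightarrow> real) \<Rightarrow> real \<Rightarrow> real" where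
  "cdfF lo hi f x = measure (distF lo hi f) {..x}"

text \<open>Winner (a > b) pays d*b + (1-d)*a, otherwise the cost is a;
  i.e. the cost is d * min a b + (1-d) * a.\<close>
definition EU_AL :: "real \<Rightarrow> ereal \<Rightarrow> (real \<Rightarrow> real) \<Rightarrow> real \<Rightarrow> (real \<Rightarrow> ennreal)
    \<Rightarrow> real \<Rightarrow> ennreal \<Rightarrow> ereal" where
  "EU_AL lo hi f d sig th a =
     ereal (th * measure (distF lo hi f) {x. sig x < a}
            + th / 2 * measure (distF lo hi f) {x. sig x = a})
     - enn2ereal (\<integral>\<^sup>+ x. (ennreal d * min a (sig x) + ennreal (1 - d) * a) \<partial>distF lo hi f)"

text \<open>Behavioural-types game with parameter e: expected payoff of a NORMAL type th choosing a,
  when the opponent is crazy (always plays infinity, no cost) with probability e and normal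
  with probability 1-e, the normal opponent using strategy sig.  Normal payoffs:
  th - b if a > b, th/2 - a if a = b, -a if a < b (cost min a b).\<close>
definition EU_BT :: "real \<Rightarrow> ereal \<Rightarrow> (real \<Rightarrow> real) \<Rightarrow> real \<Rightarrow> (real \<Rightarrow> ennreal)
    \<Rightarrow> real \<Rightarrow> ennreal \<Rightarrow> ereal" where
  "EU_BT lo hi f e sig th a =
     ereal ((1 - e) * (th * measure (distF lo hi f) {x. sig x < a}
                       + th / 2 * measure (distF lo hi f) {x. sig x = a})
            + (if a = \<infinity> then e * (th / 2) else 0))
     - enn2ereal (ennreal (1 - e) * (\<integral>\<^sup>+ x. min a (sig x) \<partial>distF lo hi f) + ennreal e * a)"

section \<open>Equilibria (pure-strategy Bayesian Nash, with the labelling convention that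
  Player 2 does not concede at zero with positive probability)\<close>

definition is_eq :: "real \<Rightarrow> ereal \<Rightarrow> (real \<Rightarrow> real)
    \<Rightarrow> ((real \<Rightarrow> ennreal) \<Rightarrow> real \<Rightarrow> ennreal \<Rightarrow> ereal)
    \<Rightarrow> (real \<Rightarrow> ennreal) \<Rightarrow> (real \<Rightarrow> ennreal) \<Rightarrow> bool" where
  "is_eq lo hi f EU s1 s2 \<longleftrightarrow>
     s1 \<in> borel_measurable borel \<and> s2 \<in> borel_measurable borel \<and>
     (\<forall>th\<in>supp lo hi. \<forall>a. EU s2 th a \<le> EU s2 th (s1 th)) \<and>
     (\<forall>th\<in>supp lo hi. \<forall>a. EU s1 th a \<le> EU s1 th (s2 th)) \<and>
     measure (distF lo hi f) {th. s2 th = 0} = 0"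

definition AL_eq :: "real \<Rightarrow> ereal \<Rightarrow> (real \<Rightarrow> real) \<Rightarrow> real
    \<Rightarrow> (real \<Rightarrow> ennreal) \<Rightarrow> (real \<Rightarrow> ennreal) \<Rightarrow> bool" where
  "AL_eq lo hi f d s1 s2 \<longleftrightarrow> is_eq lo hi f (EU_AL lo hi f d) s1 s2"

definition BT_eq :: "real \<Rightarrow> ereal \<Rightarrow> (real \<Rightarrow> real) \<Rightarrow> real
    \<Rightarrow> (real \<Rightarrow> ennreal) \<Rightarrow> (real \<Rightarrow> ennreal) \<Rightarrow> bool" where
  "BT_eq lo hi f e s1 s2 \<longleftrightarrow> is_eq lo hi f (EU_BT lo hi f e) s1 s2"

text \<open>Lower threshold: sup of Player 1 types conceding at 0 (as an extended real; -infinity if none).\<close>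
definition th1 :: "real \<Rightarrow> ereal \<Rightarrow> (real \<Rightarrow> ennreal) \<Rightarrow> ereal" where
  "th1 lo hi s1 = Sup (ereal ` {th \<in> supp lo hi. s1 th = 0})"

text \<open>k(th) = s2^{-1}(s1 th), via the generalised inverse inf {th'. s2 th' >= s1 th}
  (which equals the inverse wherever s2 is strictly increasing and continuous, and equals lo
  for types conceding at zero).\<close>
definition ttf :: "real \<Rightarrow> ereal \<Rightarrow> (real \<Rightarrow> ennreal) \<Rightarrow> (real \<Rightarrow> ennreal) \<Rightarrow> real \<Rightarrow> real" where
  "ttf lo hi s1 s2 th =
     (if th \<in> supp lo hi then Inf {th' \<in> supp lo hi. s1 th \<le> s2 th'} else 0)"

definition E_AL :: "real \<Rightarrow> ereal \<Rightarrow> (real \<Rightarrow> real) \<Rightarrow> real \<Rightarrow> (real \<Rightarrow> real) set" where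
  "E_AL lo hi f d = {ttf lo hi s1 s2 | s1 s2. AL_eq lo hi f d s1 s2}"

definition E_BT :: "real \<Rightarrow> ereal \<Rightarrow> (real \<Rightarrow> real) \<Rightarrow> real \<Rightarrow> (real \<Rightarrow> real) set" where
  "E_BT lo hi f e = {ttf lo hi s1 s2 | s1 s2. BT_eq lo hi f e s1 s2}"

definition ucc :: "real set \<Rightarrow> (nat \<Rightarrow> real \<Rightarrow> real) \<Rightarrow> (real \<Rightarrow> real) \<Rightarrow> bool" where
  "ucc S kn k \<longleftrightarrow> (\<forall>K. compact K \<and> K \<subseteq> S \<longrightarrow> uniform_limit K kn k sequentially)"

text \<open>Amann--Leininger selection: outer limit of E_AL(d) as d -> 1-.\<close>
definition AL_selection :: "real \<Rightarrow> ereal \<Rightarrow> (real \<Rightarrow> real) \<Rightarrow> (real \<Rightarrow> real) set" where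
  "AL_selection lo hi f = {k. \<exists>d kn. (\<forall>n. 0 \<le> d n \<and> d n < 1 \<and> kn n \<in> E_AL lo hi f (d n))
      \<and> d \<longlonglongrightarrow> 1 \<and> ucc (supp lo hi) kn k}"

text \<open>Behavioural-types selection: outer limit of E_BT(e) as e -> 0+.\<close>
definition BT_selection :: "real \<Rightarrow> ereal \<Rightarrow> (real \<Rightarrow> real) \<Rightarrow> (real \<Rightarrow> real) set" where
  "BT_selection lo hi f = {k. \<exists>e kn. (\<forall>n. 0 < e n \<and> e n < 1 \<and> kn n \<in> E_BT lo hi f (e n))
      \<and> e \<longlonglongrightarrow> 0 \<and> ucc (supp lo hi) kn k}"

definition ode_rhs :: "real \<Rightarrow> ereal \<Rightarrow> (real \<Rightarrow> real) \<Rightarrow> real \<Rightarrow> real \<Rightarrow> real \<Rightarrow> real" where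
  "ode_rhs lo hi f d th y =
     (1 - d * cdfF lo hi f y) / (1 - d * cdfF lo hi f th) * (y * f th) / (th * f y)"

definition Lambda :: "real \<Rightarrow> ereal \<Rightarrow> (real \<Rightarrow> real) \<Rightarrow> real \<Rightarrow> real \<Rightarrow> real \<Rightarrow> real" where
  "Lambda lo hi f d th0 th =
     (LBINT x=ereal th0..ereal th. f x / (x * (1 - d * cdfF lo hi f x)))"

end

theory Submission
  imports Defs
begin

(* Rescaling all stopping times by d turns the behavioural-types game with parameter 1 - d into
   the Amann-Leininger game with parameter d: against the opponent strategy d s, the normal type's
   payoff from d a is d times its AL payoff against s from a, because the expected cost of a normal
   opponent is homogeneous and the crazy opponent contributes exactly the cost share (1 - d) a.
   So rescaling is a bijection of equilibria that fixes the type-to-type function and the threshold,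
   which gives (ii), (iii) and transfers (i) from the AL game.

   In an AL equilibrium both strategies are monotone, have no atoms at positive times and are
   strictly increasing, and every positive stopping time of Player 1 is also chosen by a type of
   Player 2.  Comparing the best-reply conditions of types p < q of Player 1 and of their matched
   types k p < k q of Player 2 bounds (F (k q) - F (k p)) / (q - p) from both sides by
   (F q - F p) / (q - p) times ratios that tend to k (1 - d F k) / (\<theta> (1 - d F \<theta>)); squeezing
   gives the ODE, and then the chain rule shows that \<Lambda>\<^sub>d \<circ> k - \<Lambda>\<^sub>d is constant. *)

section \<open>The type distribution\<close>

locale type_distribution =
  fixes lo :: real and hi :: ereal and f :: "real \<Rightarrow> real"
  assumes lo_nonneg: "0 \<le> lo"
    and continuous_f: "continuous_on (supp lo hi) f"
    and f_pos: "\<forall>x\<in>supp lo hi. 0 < f x"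
    and prob_space_distF: "prob_space (distF lo hi f)"
begin

abbreviation "S \<equiv> supp lo hi"
abbreviation "M \<equiv> distF lo hi f"
abbreviation "F \<equiv> cdfF lo hi f"

sublocale P: prob_space M by (rule prob_space_distF)

lemma mem_S_iff: "x \<in> S \<longleftrightarrow> lo < x \<and> ereal x < hi"
  by (simp add: supp_def)

lemma open_S: "open S"
proof -
  have "S = {lo<..} \<inter> ereal -` {..<hi}" by (auto simp: supp_def)
  then show ?thesis by (simp add: open_Int open_ereal_vimage)
qed

lemma S_pos: "x \<in> S \<Longrightarrow> 0 < x"
  using lo_nonneg by (auto simp: mem_S_iff)

lemma S_between: "x \<in> S \<Longrightarrow> z \<in> S \<Longrightarrow> x \<le> y \<Longrightarrow> y \<le> z \<Longrightarrow> y \<in> S"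
  using le_less_trans[of "ereal y" "ereal z" hi] by (auto simp: mem_S_iff)

lemma S_nbhd:
  assumes "x \<in> S"
  obtains a b where "a \<in> S" "b \<in> S" "a < x" "x < b" "{a..b} \<subseteq> S"
proof -
  obtain e where "e > 0" "cball x e \<subseteq> S"
    using open_S assms open_contains_cball by blast
  then show ?thesis
    by (intro that[of "x - e" "x + e"]) (auto simp: cball_eq_atLeastAtMost)
qed

lemma S_above: "x \<in> S \<Longrightarrow> \<exists>z\<in>S. x < z"
  by (metis S_nbhd)

lemma sets_M [simp, measurable_cong]: "sets M = sets borel"
  by (simp add: distF_def)

lemma space_M [simp]: "space M = UNIV"
  by (simp add: distF_def)

lemma density_measurable: "(\<lambda>x. indicator S x * ennreal (f x)) \<in> borel_measurable borel"
proof -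
  have "(\<lambda>x. indicator S x *\<^sub>R f x) \<in> borel_measurable borel"
    by (rule borel_measurable_continuous_on_indicator[OF _ continuous_f]) (simp add: open_S borel_open)
  then have "(\<lambda>x. ennreal (indicator S x * f x)) \<in> borel_measurable borel" by simp
  also have "(\<lambda>x. ennreal (indicator S x * f x)) = (\<lambda>x. indicator S x * ennreal (f x))"
    by (auto simp: indicator_def)
  finally show ?thesis .
qed

lemma emeasure_M: "A \<in> sets borel \<Longrightarrow>
    emeasure M A = (\<integral>\<^sup>+ x. indicator S x * ennreal (f x) * indicator A x \<partial>lborel)"
  unfolding distF_def using density_measurable by (subst emeasure_density) auto

lemma measure_eq_on_S:
  assumes "A \<in> sets borel" "B \<in> sets borel" "A \<inter> S = B \<inter> S"
  shows "measure M A = measure M B"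
proof -
  have "emeasure M A = emeasure M B"
    using assms unfolding emeasure_M[OF assms(1)] emeasure_M[OF assms(2)]
    by (intro nn_integral_cong) (auto simp: indicator_def)
  then show ?thesis by (simp add: measure_def)
qed

lemma measure_outside_S: "A \<in> sets borel \<Longrightarrow> A \<inter> S = {} \<Longrightarrow> measure M A = 0"
  using measure_eq_on_S[of A "{}"] by auto

lemma positive_measure_meets_S: "A \<in> sets borel \<Longrightarrow> 0 < measure M A \<Longrightarrow> \<exists>x\<in>S. x \<in> A"
  using measure_outside_S by force

lemma AE_in_S: "AE x in M. x \<in> S"
proof -
  have "-S \<in> sets borel" by (simp add: open_S borel_open borel_comp)
  moreover have "measure M (-S) = 0" using calculation by (rule measure_outside_S) auto
  ultimately show ?thesis
    by (intro AE_I[of _ _ "-S"]) (auto simp: P.emeasure_eq_measure)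
qed

lemma measure_singleton: "measure M {c} = 0"
proof -
  have "AE x in lborel. indicator S x * ennreal (f x) * indicator {c} x = 0"
    using AE_lborel_singleton[of c] by eventually_elim simp
  then have "emeasure M {c} = 0" by (simp add: emeasure_M nn_integral_cong_AE)
  then show ?thesis by (simp add: measure_def)
qed

lemma F_bounds: "0 \<le> F x" "F x \<le> 1"
  by (auto simp: cdfF_def)

lemma F_eq_measure_atMost: "F x = measure M {..x}"
  by (simp add: cdfF_def)

lemma F_eq_measure_lessThan: "F x = measure M {..<x}"
proof -
  have "measure M {..x} = measure M {..<x} + measure M {x}"
    by (subst P.finite_measure_Union[symmetric]) (auto intro!: arg_cong[where f="measure M"])
  then show ?thesis by (simp add: cdfF_def measure_singleton)
qed

lemma measure_greaterThanAtMost: "a \<le> b \<Longrightarrow> measure M {a<..b} = F b - F a"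
proof -
  assume "a \<le> b"
  then have "measure M {..b} = measure M {..a} + measure M {a<..b}"
    by (subst P.finite_measure_Union[symmetric]) (auto intro!: arg_cong[where f="measure M"])
  then show ?thesis by (simp add: cdfF_def)
qed

lemma F_eq_integral:
  assumes "a \<in> S" "u \<in> S" "a \<le> u"
  shows "F u = F a + integral {a..u} f"
proof -
  have sub: "{a..u} \<subseteq> S" using S_between[OF assms(1,2)] by auto
  have cont: "continuous_on {a..u} f" using continuous_f sub continuous_on_subset by blast
  have nonneg: "0 \<le> f x" if "x \<in> {a..u}" for x
    using f_pos sub that by (meson less_imp_le subsetD)
  have has_int: "(f has_integral integral {a..u} f) {a..u}"
    using integrable_continuous_interval[OF cont] by (simp add: has_integral_integral)
  have "emeasure M {a<..u} = (\<integral>\<^sup>+ x. indicator S x * ennreal (f x) * indicator {a<..u} x \<partial>lborel)"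
    by (rule emeasure_M) simp
  also have "\<dots> = (\<integral>\<^sup>+ x. ennreal (f x) * indicator {a..u} x \<partial>lborel)"
    using AE_lborel_singleton[of a] by (intro nn_integral_cong_AE, eventually_elim)
      (use sub in \<open>auto simp: indicator_def\<close>)
  also have "\<dots> = ennreal (integral {a..u} f)"
    by (rule nn_integral_has_integral_lebesgue'[OF nonneg has_int])
  finally have "measure M {a<..u} = integral {a..u} f"
    using integral_nonneg[OF integrable_continuous_interval[OF cont]] nonneg
    by (simp add: measure_def)
  then show ?thesis using measure_greaterThanAtMost[OF assms(3)] by simp
qed

lemma F_has_derivative:
  assumes x: "x \<in> S"
  shows "(F has_real_derivative f x) (at x)"
proof -
  obtain a b where ab: "a \<in> S" "b \<in> S" "a < x" "x < b" "{a..b} \<subseteq> S" using S_nbhd[OF x] .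
  have "continuous_on {a..b} f" using continuous_f ab(5) continuous_on_subset by blast
  then have "((\<lambda>u. integral {a..u} f) has_real_derivative f x) (at x within {a..b})"
    by (rule integral_has_real_derivative) (use ab in auto)
  then have "((\<lambda>u. F a + integral {a..u} f) has_real_derivative f x) (at x)"
    using at_within_Icc_at[OF ab(3,4)] by (auto intro: derivative_eq_intros)
  then show ?thesis
  proof (rule has_field_derivative_transform_within_open[of _ _ _ "{a<..<b}"])
    show "F a + integral {a..u} f = F u" if "u \<in> {a<..<b}" for u
      using F_eq_integral[of a u] ab S_between[of a b u] that by auto
  qed (use ab in auto)
qed

lemma isCont_F: "x \<in> S \<Longrightarrow> isCont F x"
  using F_has_derivative DERIV_isCont by blast

lemma F_strict_mono:
  assumes "x \<in> S" "y \<in> S" "x < y"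
  shows "F x < F y"
proof (rule DERIV_pos_imp_increasing[OF assms(3)])
  fix z assume "x \<le> z" "z \<le> y"
  then have "z \<in> S" using S_between assms by blast
  then show "\<exists>D. (F has_real_derivative D) (at z) \<and> 0 < D"
    using F_has_derivative f_pos by blast
qed

lemma inj_on_F: "inj_on F S"
  by (rule inj_onI) (metis F_strict_mono linorder_neqE_linordered_idom order_less_irrefl)

end

section \<open>The AL game with real-valued strategies\<close>

locale AL_game = type_distribution +
  fixes d :: real
  assumes d_pos: "0 < d" and d_less_1: "d < 1"
begin

definition strategy :: "(real \<Rightarrow> real) \<Rightarrow> bool" where
  "strategy \<rho> \<longleftrightarrow> \<rho> \<in> borel_measurable borel \<and> (\<forall>x. 0 \<le> \<rho> x)"

definition prob_before :: "(real \<Rightarrow> real) \<Rightarrow> real \<Rightarrow> real" where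
  "prob_before \<rho> r = measure M {x. \<rho> x < r}"

definition prob_until :: "(real \<Rightarrow> real) \<Rightarrow> real \<Rightarrow> real" where
  "prob_until \<rho> r = measure M {x. \<rho> x \<le> r}"

definition prob_at :: "(real \<Rightarrow> real) \<Rightarrow> real \<Rightarrow> real" where
  "prob_at \<rho> r = measure M {x. \<rho> x = r}"

definition win_prob :: "(real \<Rightarrow> real) \<Rightarrow> real \<Rightarrow> real" where
  "win_prob \<rho> r = prob_before \<rho> r + prob_at \<rho> r / 2"

definition expected_min :: "(real \<Rightarrow> real) \<Rightarrow> real \<Rightarrow> real" where
  "expected_min \<rho> r = (\<integral>x. min r (\<rho> x) \<partial>M)"

definition cost :: "(real \<Rightarrow> real) \<Rightarrow> real \<Rightarrow> real" where
  "cost \<rho> r = d * expected_min \<rho> r + (1 - d) * r"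

definition payoff :: "(real \<Rightarrow> real) \<Rightarrow> real \<Rightarrow> real \<Rightarrow> real" where
  "payoff \<rho> th r = th * win_prob \<rho> r - cost \<rho> r"

definition best_reply :: "(real \<Rightarrow> real) \<Rightarrow> (real \<Rightarrow> real) \<Rightarrow> bool" where
  "best_reply \<rho>' \<rho> \<longleftrightarrow> (\<forall>th\<in>S. \<forall>r\<ge>0. payoff \<rho>' th r \<le> payoff \<rho>' th (\<rho> th))"

lemma strategy_measurable: "strategy \<rho> \<Longrightarrow> \<rho> \<in> borel_measurable borel"
  by (simp add: strategy_def)

lemma strategy_nonneg: "strategy \<rho> \<Longrightarrow> 0 \<le> \<rho> x"
  by (simp add: strategy_def)

lemma best_replyD:
  "best_reply \<rho>' \<rho> \<Longrightarrow> th \<in> S \<Longrightarrow> 0 \<le> r \<Longrightarrow>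
    th * win_prob \<rho>' r - cost \<rho>' r \<le> th * win_prob \<rho>' (\<rho> th) - cost \<rho>' (\<rho> th)"
  unfolding best_reply_def payoff_def by blast

lemma one_minus_dF_pos: "0 < 1 - d * F z"
  and one_minus_d_le: "1 - d \<le> 1 - d * F z"
proof -
  have "d * F z \<le> d" using d_pos F_bounds[of z] by (simp add: mult_left_le)
  then show "1 - d \<le> 1 - d * F z" "0 < 1 - d * F z" using d_less_1 by simp_all
qed

lemma prob_until_eq: "\<rho> \<in> borel_measurable borel \<Longrightarrow> prob_until \<rho> r = prob_before \<rho> r + prob_at \<rho> r"
  unfolding prob_until_def prob_before_def prob_at_def
  by (subst P.finite_measure_Union[symmetric]) (auto intro!: arg_cong[where f="measure M"])

lemma win_prob_bounds:
  assumes "\<rho> \<in> borel_measurable borel"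
  shows "prob_before \<rho> r \<le> win_prob \<rho> r" "win_prob \<rho> r \<le> prob_until \<rho> r"
  using prob_until_eq[OF assms, of r] by (auto simp: win_prob_def prob_at_def)

lemma prob_until_le_prob_before:
  assumes [measurable]: "\<rho> \<in> borel_measurable borel" and "r' < r"
  shows "prob_until \<rho> r' \<le> prob_before \<rho> r"
  unfolding prob_until_def prob_before_def using assms(2)
  by (intro P.finite_measure_mono) (auto, measurable)

lemma win_prob_diff_le:
  assumes [measurable]: "\<rho> \<in> borel_measurable borel" and "r' \<le> r"
  shows "win_prob \<rho> r - win_prob \<rho> r' \<le> measure M {x. r' \<le> \<rho> x \<and> \<rho> x \<le> r}"
proof -
  have "prob_until \<rho> r = prob_before \<rho> r' + measure M {x. r' \<le> \<rho> x \<and> \<rho> x \<le> r}"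
    unfolding prob_until_def prob_before_def using assms(2)
    by (subst P.finite_measure_Union[symmetric]) (auto intro!: arg_cong[where f="measure M"])
  then show ?thesis using win_prob_bounds[OF assms(1), of r] win_prob_bounds[OF assms(1), of r']
    by simp
qed

lemma integrable_min:
  "strategy \<rho> \<Longrightarrow> 0 \<le> r \<Longrightarrow> integrable M (\<lambda>x. min r (\<rho> x))"
  by (rule P.integrable_const_bound[where B=r]) (auto simp: strategy_def)

lemma expected_min_diff_bounds:
  assumes st: "strategy \<rho>" and r: "0 \<le> r'" "r' \<le> r"
  shows "(r - r') * (1 - prob_before \<rho> r) \<le> expected_min \<rho> r - expected_min \<rho> r'"
    and "expected_min \<rho> r - expected_min \<rho> r' \<le> (r - r') * (1 - prob_until \<rho> r')"
proof -
  have [measurable]: "\<rho> \<in> borel_measurable borel" using st by (rule strategy_measurable)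
  have int_r: "integrable M (\<lambda>x. min r (\<rho> x))" and int_r': "integrable M (\<lambda>x. min r' (\<rho> x))"
    using integrable_min[OF st] r by auto
  note int = Bochner_Integration.integrable_diff[OF int_r int_r']
  have diff: "expected_min \<rho> r - expected_min \<rho> r' = (\<integral>x. min r (\<rho> x) - min r' (\<rho> x) \<partial>M)"
    unfolding expected_min_def by (rule Bochner_Integration.integral_diff[OF int_r int_r', symmetric])
  have int_ind: "integrable M (\<lambda>x. (r - r') * indicator A x)" if "A \<in> sets borel" for A
    by (rule P.integrable_const_bound[where B="\<bar>r - r'\<bar>"]) (use that in \<open>auto simp: indicator_def\<close>)
  have sets: "{x. r \<le> \<rho> x} \<in> sets borel" "{x. r' < \<rho> x} \<in> sets borel"
    by measurable
  have "(\<integral>x. (r - r') * indicator {x. r \<le> \<rho> x} x \<partial>M) \<le> (\<integral>x. min r (\<rho> x) - min r' (\<rho> x) \<partial>M)"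
    by (rule integral_mono[OF int_ind[OF sets(1)] int]) (use r in \<open>auto simp: indicator_def\<close>)
  moreover have "measure M {x. r \<le> \<rho> x} = 1 - prob_before \<rho> r"
    unfolding prob_before_def by (subst P.prob_compl[symmetric]) (auto intro!: arg_cong[where f="measure M"])
  ultimately show "(r - r') * (1 - prob_before \<rho> r) \<le> expected_min \<rho> r - expected_min \<rho> r'"
    using diff by simp
  have "(\<integral>x. min r (\<rho> x) - min r' (\<rho> x) \<partial>M) \<le> (\<integral>x. (r - r') * indicator {x. r' < \<rho> x} x \<partial>M)"
    by (rule integral_mono[OF int int_ind[OF sets(2)]]) (use r in \<open>auto simp: indicator_def\<close>)
  moreover have "measure M {x. r' < \<rho> x} = 1 - prob_until \<rho> r'"
    unfolding prob_until_def by (subst P.prob_compl[symmetric]) (auto intro!: arg_cong[where f="measure M"])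
  ultimately show "expected_min \<rho> r - expected_min \<rho> r' \<le> (r - r') * (1 - prob_until \<rho> r')"
    using diff by simp
qed

lemma cost_diff_bounds:
  assumes "strategy \<rho>" "0 \<le> r'" "r' \<le> r"
  shows "(r - r') * (1 - d * prob_before \<rho> r) \<le> cost \<rho> r - cost \<rho> r'"
    and "cost \<rho> r - cost \<rho> r' \<le> (r - r') * (1 - d * prob_until \<rho> r')"
proof -
  have "d * ((r - r') * (1 - prob_before \<rho> r)) \<le> d * (expected_min \<rho> r - expected_min \<rho> r')"
    using expected_min_diff_bounds(1)[OF assms] d_pos by (intro mult_left_mono) auto
  then show "(r - r') * (1 - d * prob_before \<rho> r) \<le> cost \<rho> r - cost \<rho> r'"
    unfolding cost_def by (simp add: algebra_simps)
  have "d * (expected_min \<rho> r - expected_min \<rho> r') \<le> d * ((r - r') * (1 - prob_until \<rho> r'))"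
    using expected_min_diff_bounds(2)[OF assms] d_pos by (intro mult_left_mono) auto
  then show "cost \<rho> r - cost \<rho> r' \<le> (r - r') * (1 - d * prob_until \<rho> r')"
    unfolding cost_def by (simp add: algebra_simps)
qed

lemma cost_diff_linear_bounds:
  assumes "strategy \<rho>" "0 \<le> r'" "r' \<le> r"
  shows "(1 - d) * (r - r') \<le> cost \<rho> r - cost \<rho> r'" and "cost \<rho> r - cost \<rho> r' \<le> r - r'"
proof -
  have "0 \<le> d * (r - r')" using assms d_pos by simp
  then have "d * (r - r') * prob_before \<rho> r \<le> d * (r - r')"
    and "0 \<le> d * (r - r') * prob_until \<rho> r'"
    by (simp_all add: prob_before_def prob_until_def mult_left_le)
  then have "(1 - d) * (r - r') \<le> (r - r') * (1 - d * prob_before \<rho> r)"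
    and "(r - r') * (1 - d * prob_until \<rho> r') \<le> r - r'"
    by (simp_all add: algebra_simps)
  then show "(1 - d) * (r - r') \<le> cost \<rho> r - cost \<rho> r'" "cost \<rho> r - cost \<rho> r' \<le> r - r'"
    using cost_diff_bounds[OF assms] by linarith+
qed

end

context AL_game
begin

lemma best_reply_win_prob_increase:
  assumes st: "strategy \<rho>'" and br: "best_reply \<rho>' \<rho>" and th: "th \<in> S"
    and r: "0 \<le> r" "r < \<rho> th"
  shows "win_prob \<rho>' r < win_prob \<rho>' (\<rho> th)"
proof -
  have "0 < (1 - d) * (\<rho> th - r)" using d_less_1 r by simp
  also have "\<dots> \<le> cost \<rho>' (\<rho> th) - cost \<rho>' r"
    using cost_diff_linear_bounds(1)[OF st r(1)] r(2) by simp
  also have "\<dots> \<le> th * (win_prob \<rho>' (\<rho> th) - win_prob \<rho>' r)"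
    using best_replyD[OF br th r(1)] by (simp add: algebra_simps)
  finally show ?thesis using S_pos[OF th] by (simp add: zero_less_mult_iff)
qed

lemma best_reply_opponent_nearby:
  assumes st: "strategy \<rho>'" and br: "best_reply \<rho>' \<rho>" and th: "th \<in> S"
    and r: "0 \<le> r" "r < \<rho> th"
  shows "\<exists>y\<in>S. r \<le> \<rho>' y \<and> \<rho>' y \<le> \<rho> th"
proof -
  note [measurable] = strategy_measurable[OF st]
  have A: "{x. r \<le> \<rho>' x \<and> \<rho>' x \<le> \<rho> th} \<in> sets borel" by measurable
  have "0 < win_prob \<rho>' (\<rho> th) - win_prob \<rho>' r"
    using best_reply_win_prob_increase[OF assms] by simp
  also have "\<dots> \<le> measure M {x. r \<le> \<rho>' x \<and> \<rho>' x \<le> \<rho> th}"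
    using win_prob_diff_le[OF strategy_measurable[OF st]] r(2) by simp
  finally show ?thesis using positive_measure_meets_S[OF A] by simp
qed

lemma best_reply_mono:
  assumes st: "strategy \<rho>'" "strategy \<rho>" and br: "best_reply \<rho>' \<rho>"
    and th: "th \<in> S" "th' \<in> S" "th \<le> th'"
  shows "\<rho> th \<le> \<rho> th'"
proof (rule ccontr)
  assume "\<not> \<rho> th \<le> \<rho> th'"
  then have lt: "\<rho> th' < \<rho> th" by simp
  then have "th < th'" using th(3) by (cases "th = th'") auto
  moreover have "0 < win_prob \<rho>' (\<rho> th) - win_prob \<rho>' (\<rho> th')"
    using best_reply_win_prob_increase[OF st(1) br th(1) strategy_nonneg[OF st(2)] lt] by simp
  ultimately have "0 < (th' - th) * (win_prob \<rho>' (\<rho> th) - win_prob \<rho>' (\<rho> th'))" by simp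
  moreover have "(th' - th) * (win_prob \<rho>' (\<rho> th) - win_prob \<rho>' (\<rho> th')) \<le> 0"
    using best_replyD[OF br th(1) strategy_nonneg[OF st(2), of th']]
      best_replyD[OF br th(2) strategy_nonneg[OF st(2), of th]]
    by (simp add: algebra_simps)
  ultimately show False by linarith
qed

text \<open>An opponent type stopping within h before an atom of \<rho> at a could instead wait until
  a + h, winning half of the atom for an extra cost of at most 2 h.\<close>

lemma atom_mass_bound:
  assumes st: "strategy \<rho>'" "strategy \<rho>" and br: "best_reply \<rho> \<rho>'"
    and y: "y \<in> S" and h: "0 < h" "a - h \<le> \<rho>' y" "\<rho>' y \<le> a"
  shows "y * prob_at \<rho> a \<le> 4 * h"
proof -
  define b where "b = \<rho>' y"
  have b0: "0 \<le> b" using strategy_nonneg[OF st(1)] by (simp add: b_def)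
  have meas: "\<rho> \<in> borel_measurable borel" using strategy_measurable[OF st(2)] .
  have "prob_before \<rho> a + prob_at \<rho> a \<le> win_prob \<rho> (a + h)"
    using prob_until_eq[OF meas, of a] prob_until_le_prob_before[OF meas, of a "a + h"]
      win_prob_bounds[OF meas, of "a + h"] h by simp
  moreover have "win_prob \<rho> b \<le> prob_before \<rho> a + prob_at \<rho> a / 2"
  proof (cases "b = a")
    case False
    then have "b < a" using h by (simp add: b_def)
    then have "win_prob \<rho> b \<le> prob_before \<rho> a"
      using win_prob_bounds(2)[OF meas, of b] prob_until_le_prob_before[OF meas, of b a] by simp
    then show ?thesis using measure_nonneg[of M "{x. \<rho> x = a}"] unfolding prob_at_def by linarith
  qed (simp add: win_prob_def)
  ultimately have "y * (prob_at \<rho> a / 2) \<le> y * (win_prob \<rho> (a + h) - win_prob \<rho> b)"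
    using S_pos[OF y] by (intro mult_left_mono) auto
  also have "\<dots> \<le> cost \<rho> (a + h) - cost \<rho> b"
    using best_replyD[OF br y, of "a + h"] b0 h by (simp add: b_def algebra_simps)
  also have "\<dots> \<le> (a + h) - b"
    using cost_diff_linear_bounds(2)[OF st(2) b0, of "a + h"] h by (simp add: b_def)
  also have "\<dots> \<le> 2 * h" using h by (simp add: b_def)
  finally show ?thesis by simp
qed

text \<open>By atom_mass_bound, opponent types stopping ever closer below an atom would have types
  tending to 0, which is incompatible with the monotonicity of \<rho>'.\<close>

lemma best_reply_no_atom:
  assumes st: "strategy \<rho>'" "strategy \<rho>" and br: "best_reply \<rho>' \<rho>" "best_reply \<rho> \<rho>'"
    and a: "0 < a"
  shows "prob_at \<rho> a = 0"
proof (rule ccontr)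
  define m where "m = prob_at \<rho> a"
  assume "prob_at \<rho> a \<noteq> 0"
  then have m: "0 < m"
    using measure_nonneg[of M "{x. \<rho> x = a}"] unfolding m_def prob_at_def by linarith
  note [measurable] = strategy_measurable[OF st(2)]
  have A: "{x. \<rho> x = a} \<in> sets borel" by measurable
  obtain th where th: "th \<in> S" "\<rho> th = a"
    using positive_measure_meets_S[OF A] m unfolding m_def prob_at_def by auto
  have near: "\<exists>y\<in>S. a - h \<le> \<rho>' y \<and> \<rho>' y \<le> a" if "0 < h" "h \<le> a" for h
    using best_reply_opponent_nearby[OF st(1) br(1) th(1), of "a - h"] that th(2) by simp
  have bound: "y * m \<le> 4 * h" if "y \<in> S" "0 < h" "a - h \<le> \<rho>' y" "\<rho>' y \<le> a" for y h
    using atom_mass_bound[OF st br(2) that] by (simp add: m_def)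
  obtain y where y: "y \<in> S" "0 \<le> \<rho>' y" "\<rho>' y \<le> a" using near[of a] a by auto
  have ym: "0 < y * m" using S_pos[OF y(1)] m by simp
  have "\<rho>' y = a"
  proof (rule ccontr)
    assume "\<rho>' y \<noteq> a"
    then have lt: "\<rho>' y < a" using y by simp
    define h where "h = min ((a - \<rho>' y) / 2) (y * m / 8)"
    have h_pos: "0 < h" using lt ym by (simp add: h_def)
    have h_le: "h \<le> (a - \<rho>' y) / 2" "h \<le> y * m / 8"
      unfolding h_def by (rule min.cobounded1, rule min.cobounded2)
    have h: "0 < h" "h \<le> a" "h \<le> (a - \<rho>' y) / 2" "h \<le> y * m / 8"
      using h_pos h_le y(2) by auto
    obtain y' where y': "y' \<in> S" "a - h \<le> \<rho>' y'" "\<rho>' y' \<le> a" using near[OF h(1,2)] by blast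
    have "y' * m \<le> 4 * h" using bound[OF y'(1) h(1) y'(2,3)] .
    also have "\<dots> < y * m" using h(4) ym by linarith
    finally have "y' \<le> y" using m by simp
    then have "\<rho>' y' \<le> \<rho>' y" using best_reply_mono[OF st(2,1) br(2) y'(1) y(1)] by simp
    moreover have "2 * h \<le> a - \<rho>' y" using h(3) by simp
    ultimately show False using y'(2) h(1) by linarith
  qed
  then have "y * m \<le> 4 * min a (y * m / 8)"
    using bound[OF y(1), of "min a (y * m / 8)"] a ym by simp
  then show False using ym min.cobounded2[of a "y * m / 8"] by linarith
qed

lemma pooling_mass:
  assumes st: "strategy \<rho>'" "strategy \<rho>" and br: "best_reply \<rho>' \<rho>"
    and th: "th \<in> S" "th' \<in> S" "th < th'" and eq: "\<rho> th = \<rho> th'"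
  shows "F th' - F th \<le> prob_at \<rho> (\<rho> th)"
proof -
  note [measurable] = strategy_measurable[OF st(2)]
  have "\<rho> x = \<rho> th" if "x \<in> {th<..th'}" for x
  proof -
    have "x \<in> S" using S_between[OF th(1,2)] that by auto
    then show ?thesis
      using best_reply_mono[OF st br th(1)] best_reply_mono[OF st br _ th(2)] that eq
      by (metis greaterThanAtMost_iff less_imp_le order_antisym)
  qed
  then have "measure M {th<..th'} \<le> measure M {x. \<rho> x = \<rho> th}"
    by (intro P.finite_measure_mono) (auto, measurable)
  then show ?thesis using measure_greaterThanAtMost[of th th'] th by (simp add: prob_at_def)
qed

lemma best_reply_strict_mono:
  assumes st: "strategy \<rho>'" "strategy \<rho>" and br: "best_reply \<rho>' \<rho>" "best_reply \<rho> \<rho>'"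
    and th: "th \<in> S" "th' \<in> S" "th < th'" and pos: "0 < \<rho> th'"
  shows "\<rho> th < \<rho> th'"
proof (rule ccontr)
  assume "\<not> \<rho> th < \<rho> th'"
  then have eq: "\<rho> th = \<rho> th'" using best_reply_mono[OF st br(1) th(1,2)] th(3) by simp
  have "F th' - F th \<le> prob_at \<rho> (\<rho> th)" using pooling_mass[OF st br(1) th eq] .
  moreover have "prob_at \<rho> (\<rho> th) = 0" using best_reply_no_atom[OF st br] pos eq by simp
  ultimately show False using F_strict_mono[OF th] by simp
qed

end

lemma (in AL_game) best_reply_incentive_bounds:
  assumes st: "strategy \<sigma>" and br: "best_reply \<sigma> \<rho>" and pq: "p \<in> S" "q \<in> S"
    and r: "0 \<le> \<rho> p" "\<rho> p \<le> \<rho> q"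
  shows "(\<rho> q - \<rho> p) * (1 - d * prob_before \<sigma> (\<rho> q)) \<le> q * (win_prob \<sigma> (\<rho> q) - win_prob \<sigma> (\<rho> p))"
    and "p * (win_prob \<sigma> (\<rho> q) - win_prob \<sigma> (\<rho> p)) \<le> (\<rho> q - \<rho> p) * (1 - d * prob_until \<sigma> (\<rho> p))"
  using cost_diff_bounds[OF st r] best_replyD[OF br pq(2) r(1)] best_replyD[OF br pq(1), of "\<rho> q"] r
  by (simp_all add: algebra_simps)

locale AL_equilibrium = AL_game +
  fixes \<rho>1 \<rho>2 :: "real \<Rightarrow> real"
  assumes strategy1: "strategy \<rho>1" and strategy2: "strategy \<rho>2"
    and best_reply1: "best_reply \<rho>2 \<rho>1" and best_reply2: "best_reply \<rho>1 \<rho>2"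
    and no_concession2: "measure M {x. \<rho>2 x = 0} = 0"
begin

lemma measurable_rho1 [measurable]: "\<rho>1 \<in> borel_measurable borel"
  using strategy_measurable[OF strategy1] .

lemma measurable_rho2 [measurable]: "\<rho>2 \<in> borel_measurable borel"
  using strategy_measurable[OF strategy2] .

lemma rho1_nonneg: "0 \<le> \<rho>1 x"
  using strategy_nonneg[OF strategy1] .

lemma rho2_nonneg: "0 \<le> \<rho>2 x"
  using strategy_nonneg[OF strategy2] .

lemma rho1_mono: "x \<in> S \<Longrightarrow> x' \<in> S \<Longrightarrow> x \<le> x' \<Longrightarrow> \<rho>1 x \<le> \<rho>1 x'"
  using best_reply_mono[OF strategy2 strategy1 best_reply1] .

lemma rho2_mono: "x \<in> S \<Longrightarrow> x' \<in> S \<Longrightarrow> x \<le> x' \<Longrightarrow> \<rho>2 x \<le> \<rho>2 x'"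
  using best_reply_mono[OF strategy1 strategy2 best_reply2] .

lemma rho1_strict_mono: "x \<in> S \<Longrightarrow> x' \<in> S \<Longrightarrow> x < x' \<Longrightarrow> 0 < \<rho>1 x' \<Longrightarrow> \<rho>1 x < \<rho>1 x'"
  using best_reply_strict_mono[OF strategy2 strategy1 best_reply1 best_reply2] .

lemma no_atom_rho1: "0 < t \<Longrightarrow> prob_at \<rho>1 t = 0"
  using best_reply_no_atom[OF strategy2 strategy1 best_reply1 best_reply2] .

lemma no_atom_rho2: "prob_at \<rho>2 t = 0"
proof (cases t "0 :: real" rule: linorder_cases)
  case less
  then have "{x. \<rho>2 x = t} = {}" using rho2_nonneg by (auto simp: not_le[symmetric])
  then show ?thesis by (simp add: prob_at_def)
qed (use no_concession2 best_reply_no_atom[OF strategy1 strategy2 best_reply2 best_reply1]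
  in \<open>auto simp: prob_at_def\<close>)

lemma rho2_strict_mono:
  assumes y: "y \<in> S" "y' \<in> S" "y < y'"
  shows "\<rho>2 y < \<rho>2 y'"
proof (cases "0 < \<rho>2 y'")
  case True
  then show ?thesis by (rule best_reply_strict_mono[OF strategy1 strategy2 best_reply2 best_reply1 y])
next
  case False
  then have "\<rho>2 y = \<rho>2 y'" using rho2_mono[OF y(1,2)] y(3) rho2_nonneg[of y] rho2_nonneg[of y'] by simp
  then have "F y' - F y \<le> 0"
    using pooling_mass[OF strategy1 strategy2 best_reply2 y] no_atom_rho2 by simp
  then show ?thesis using F_strict_mono[OF y] by simp
qed

lemma rho2_less_iff: "y \<in> S \<Longrightarrow> y' \<in> S \<Longrightarrow> \<rho>2 y < \<rho>2 y' \<longleftrightarrow> y < y'"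
  using rho2_strict_mono by (metis linorder_neqE_linordered_idom order_less_asym order_less_irrefl)

lemma rho2_le_iff: "y \<in> S \<Longrightarrow> y' \<in> S \<Longrightarrow> \<rho>2 y \<le> \<rho>2 y' \<longleftrightarrow> y \<le> y'"
  using rho2_less_iff by (meson not_le)

lemma rho1_less_iff:
  assumes "x \<in> S" "th \<in> S" "0 < \<rho>1 th"
  shows "\<rho>1 x < \<rho>1 th \<longleftrightarrow> x < th"
  using rho1_strict_mono[OF assms(1,2) _ assms(3)] rho1_mono[OF assms(2,1)] by (meson not_le)

lemma rho1_le_iff:
  assumes "x \<in> S" "th \<in> S" "0 < \<rho>1 th"
  shows "\<rho>1 x \<le> \<rho>1 th \<longleftrightarrow> x \<le> th"
proof
  assume le: "\<rho>1 x \<le> \<rho>1 th"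
  show "x \<le> th"
  proof (rule ccontr)
    assume "\<not> x \<le> th"
    then have "th < x" by simp
    moreover have "0 < \<rho>1 x" using rho1_mono[OF assms(2,1)] \<open>th < x\<close> assms(3) by simp
    ultimately show False using rho1_strict_mono[OF assms(2,1)] le by simp
  qed
qed (rule rho1_mono[OF assms(1,2)])

lemma prob_before_rho2: "y \<in> S \<Longrightarrow> prob_before \<rho>2 (\<rho>2 y) = F y"
  unfolding prob_before_def F_eq_measure_lessThan using rho2_less_iff
  by (intro measure_eq_on_S) auto

lemma prob_until_rho2: "y \<in> S \<Longrightarrow> prob_until \<rho>2 (\<rho>2 y) = F y"
  unfolding prob_until_def F_eq_measure_atMost using rho2_le_iff
  by (intro measure_eq_on_S) auto

lemma win_prob_rho2: "y \<in> S \<Longrightarrow> win_prob \<rho>2 (\<rho>2 y) = F y"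
  using prob_before_rho2 no_atom_rho2 by (simp add: win_prob_def)

lemma prob_before_rho1: "th \<in> S \<Longrightarrow> 0 < \<rho>1 th \<Longrightarrow> prob_before \<rho>1 (\<rho>1 th) = F th"
  unfolding prob_before_def F_eq_measure_lessThan using rho1_less_iff
  by (intro measure_eq_on_S) auto

lemma prob_until_rho1: "th \<in> S \<Longrightarrow> 0 < \<rho>1 th \<Longrightarrow> prob_until \<rho>1 (\<rho>1 th) = F th"
  unfolding prob_until_def F_eq_measure_atMost using rho1_le_iff
  by (intro measure_eq_on_S) auto

lemma win_prob_rho1: "th \<in> S \<Longrightarrow> 0 < \<rho>1 th \<Longrightarrow> win_prob \<rho>1 (\<rho>1 th) = F th"
  using prob_before_rho1 no_atom_rho1 by (simp add: win_prob_def)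

lemma no_reply1_in_gap:
  assumes gap: "\<forall>y\<in>S. \<rho>2 y < t \<or> b \<le> \<rho>2 y" and t: "0 \<le> t" and x: "x \<in> S"
  shows "\<not> (t < \<rho>1 x \<and> \<rho>1 x \<le> b)"
proof
  assume r: "t < \<rho>1 x \<and> \<rho>1 x \<le> b"
  have "\<rho>2 y < \<rho>1 x \<longleftrightarrow> \<rho>2 y < t" if "y \<in> S" for y
    using gap that r by (meson le_less_trans less_trans not_le)
  then have "{y. \<rho>2 y < \<rho>1 x} \<inter> S = {y. \<rho>2 y < t} \<inter> S" by auto
  then have "prob_before \<rho>2 (\<rho>1 x) = prob_before \<rho>2 t"
    unfolding prob_before_def by (intro measure_eq_on_S) auto
  then have "win_prob \<rho>2 (\<rho>1 x) = win_prob \<rho>2 t" using no_atom_rho2 by (simp add: win_prob_def)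
  then show False using best_reply_win_prob_increase[OF strategy2 best_reply1 x t] r by simp
qed

lemma rho2_reaches_rho1:
  assumes th: "th \<in> S" and pos: "0 < \<rho>1 th"
  shows "\<exists>y\<in>S. \<rho>1 th \<le> \<rho>2 y"
proof (rule ccontr)
  assume "\<not> ?thesis"
  then have gap: "\<forall>y\<in>S. \<rho>2 y < \<rho>1 th \<or> b \<le> \<rho>2 y" for b by (auto simp: not_le)
  obtain th' where th': "th' \<in> S" "th < th'" using S_above[OF th] by blast
  then have "\<rho>1 th < \<rho>1 th'" using rho1_strict_mono[OF th] rho1_mono[OF th] pos
    by (meson less_imp_le less_le_trans)
  then show False using no_reply1_in_gap[OF gap[of "\<rho>1 th'"] less_imp_le[OF pos] th'(1)] by simp
qed

lemma rho2_jumps_over: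
  assumes th: "th \<in> S" and pos: "0 < \<rho>1 th" and unmatched: "\<forall>y\<in>S. \<rho>2 y \<noteq> \<rho>1 th"
  obtains y0 where "y0 \<in> S" "\<rho>1 th < \<rho>2 y0" "\<forall>y\<in>S. \<rho>2 y < \<rho>1 th \<or> \<rho>2 y0 \<le> \<rho>2 y"
proof -
  define t where "t = \<rho>1 th"
  have ne: "\<rho>2 y \<noteq> t" if "y \<in> S" for y using unmatched that by (simp add: t_def)
  define B where "B = {y\<in>S. t < \<rho>2 y}"
  define y0 where "y0 = Inf B"
  obtain b0 where "b0 \<in> S" "t \<le> \<rho>2 b0" using rho2_reaches_rho1[OF th pos] unfolding t_def by blast
  then have b0: "b0 \<in> B" using ne[of b0] by (auto simp: B_def)
  have "bdd_below B" by (rule bdd_belowI[of _ lo]) (auto simp: B_def mem_S_iff)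
  then have y0_le: "y0 \<le> b" if "b \<in> B" for b using that by (simp add: y0_def cInf_lower)
  have le_y0: "z \<le> y0" if z: "z \<in> S" "\<rho>2 z < t" for z
    unfolding y0_def using b0
  proof (intro cInf_greatest)
    show "z \<le> b" if "b \<in> B" for b
      using rho2_less_iff[OF z(1), of b] z(2) that unfolding B_def by auto
  qed auto
  obtain a where a: "a \<in> S" "\<rho>2 a \<le> t"
    using best_reply_opponent_nearby[OF strategy2 best_reply1 th order_refl pos] unfolding t_def by blast
  have y0S: "y0 \<in> S"
    using S_between[OF a(1) _ le_y0 y0_le[OF b0]] a ne[OF a(1)] b0 unfolding B_def by auto
  have gap: "\<forall>y\<in>S. \<rho>2 y < t \<or> \<rho>2 y0 \<le> \<rho>2 y"
  proof
    fix y assume y: "y \<in> S"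
    show "\<rho>2 y < t \<or> \<rho>2 y0 \<le> \<rho>2 y"
    proof (cases "\<rho>2 y < t")
      case False
      then have "y \<in> B" using y ne[OF y] by (auto simp: B_def)
      then show ?thesis using rho2_mono[OF y0S y] y0_le by simp
    qed simp
  qed
  have "t < \<rho>2 y0"
  proof (rule ccontr)
    assume "\<not> t < \<rho>2 y0"
    then have lt: "\<rho>2 y0 < t" using ne[OF y0S] by simp
    have "0 \<le> (\<rho>2 y0 + t) / 2" "(\<rho>2 y0 + t) / 2 < \<rho>1 th"
      using lt rho2_nonneg[of y0] unfolding t_def by simp_all
    then obtain y where y: "y \<in> S" "(\<rho>2 y0 + t) / 2 \<le> \<rho>2 y" "\<rho>2 y \<le> t"
      using best_reply_opponent_nearby[OF strategy2 best_reply1 th] unfolding t_def by blast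
    then have "y \<le> y0" using le_y0[OF y(1)] ne[OF y(1)] by simp
    then show False using rho2_mono[OF y(1) y0S] y(2) lt by simp
  qed
  then show ?thesis using that[OF y0S] gap unfolding t_def by blast
qed

text \<open>Player 1 never stops inside a gap of the stopping times of Player 2 (no_reply1_in_gap),
  but the best replies of the Player 2 type at the upper end of the gap force it to.\<close>

lemma rho1_matched:
  assumes th: "th \<in> S" and pos: "0 < \<rho>1 th"
  shows "\<exists>y\<in>S. \<rho>2 y = \<rho>1 th"
proof (rule ccontr)
  assume "\<not> ?thesis"
  then obtain y0 where y0: "y0 \<in> S" "\<rho>1 th < \<rho>2 y0"
    and gap: "\<forall>y\<in>S. \<rho>2 y < \<rho>1 th \<or> \<rho>2 y0 \<le> \<rho>2 y"
    using rho2_jumps_over[OF th pos] by blast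
  define r where "r = (\<rho>1 th + \<rho>2 y0) / 2"
  have "0 \<le> r" "r < \<rho>2 y0" using y0(2) pos unfolding r_def by simp_all
  then obtain x where x: "x \<in> S" "r \<le> \<rho>1 x" "\<rho>1 x \<le> \<rho>2 y0"
    using best_reply_opponent_nearby[OF strategy1 best_reply2 y0(1)] by blast
  moreover have "\<rho>1 th < \<rho>1 x" using x(2) y0(2) unfolding r_def by (simp add: field_simps)
  ultimately show False using no_reply1_in_gap[OF gap less_imp_le[OF pos] x(1)] by simp
qed

lemma matched_types_sandwich:
  assumes p: "p \<in> S" and q: "q \<in> S" and pq: "p < q" and pos: "0 < \<rho>1 p"
    and yp: "yp \<in> S" "\<rho>2 yp = \<rho>1 p" and yq: "yq \<in> S" "\<rho>2 yq = \<rho>1 q"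
  shows "(F q - F p) * yp * (1 - d * F yq) \<le> (F yq - F yp) * (q * (1 - d * F p))"
    and "(F yq - F yp) * (p * (1 - d * F q)) \<le> (F q - F p) * yq * (1 - d * F yp)"
proof -
  define D where "D = \<rho>1 q - \<rho>1 p"
  have lt: "\<rho>1 p < \<rho>1 q" using rho1_strict_mono[OF p q pq] rho1_mono[OF p q] pq pos by simp
  then have posq: "0 < \<rho>1 q" using pos by simp
  have W2: "win_prob \<rho>2 (\<rho>1 p) = F yp" "win_prob \<rho>2 (\<rho>1 q) = F yq"
    "prob_before \<rho>2 (\<rho>1 q) = F yq" "prob_until \<rho>2 (\<rho>1 p) = F yp"
    using win_prob_rho2 prob_before_rho2 prob_until_rho2 yp yq by metis+
  have W1: "win_prob \<rho>1 (\<rho>1 p) = F p" "win_prob \<rho>1 (\<rho>1 q) = F q"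
    "prob_before \<rho>1 (\<rho>1 q) = F q" "prob_until \<rho>1 (\<rho>1 p) = F p"
    using win_prob_rho1 prob_before_rho1 prob_until_rho1 p q pos posq by metis+
  have e1: "D * (1 - d * F yq) \<le> q * (F yq - F yp)"
    and e2: "p * (F yq - F yp) \<le> D * (1 - d * F yp)"
    using best_reply_incentive_bounds[OF strategy2 best_reply1 p q rho1_nonneg less_imp_le[OF lt]]
    unfolding W2 D_def .
  have e3: "D * (1 - d * F q) \<le> yq * (F q - F p)"
    and e4: "yp * (F q - F p) \<le> D * (1 - d * F p)"
    using best_reply_incentive_bounds[OF strategy1 best_reply2 yp(1) yq(1) rho2_nonneg]
      less_imp_le[OF lt]
    unfolding yp(2) yq(2) W1 D_def by auto
  have "yp * (F q - F p) * (1 - d * F yq) \<le> D * (1 - d * F p) * (1 - d * F yq)"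
    by (rule mult_right_mono[OF e4 less_imp_le[OF one_minus_dF_pos]])
  also have "\<dots> = D * (1 - d * F yq) * (1 - d * F p)" by simp
  also have "\<dots> \<le> q * (F yq - F yp) * (1 - d * F p)"
    by (rule mult_right_mono[OF e1 less_imp_le[OF one_minus_dF_pos]])
  finally show "(F q - F p) * yp * (1 - d * F yq) \<le> (F yq - F yp) * (q * (1 - d * F p))"
    by (simp add: algebra_simps)
  have "p * (F yq - F yp) * (1 - d * F q) \<le> D * (1 - d * F yp) * (1 - d * F q)"
    by (rule mult_right_mono[OF e2 less_imp_le[OF one_minus_dF_pos]])
  also have "\<dots> = D * (1 - d * F q) * (1 - d * F yp)" by simp
  also have "\<dots> \<le> yq * (F q - F p) * (1 - d * F yp)"
    by (rule mult_right_mono[OF e3 less_imp_le[OF one_minus_dF_pos]])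
  finally show "(F yq - F yp) * (p * (1 - d * F q)) \<le> (F q - F p) * yq * (1 - d * F yp)"
    by (simp add: algebra_simps)
qed

end

section \<open>Differentiability of the type-to-type function\<close>

lemma divide_mult_le_divide:
  fixes D E N1 N2 :: real
  assumes "0 < D" "0 < E" "N1 \<le> N2 * E"
  shows "N1 / (D * E) \<le> N2 / D"
proof -
  have "N1 / (D * E) \<le> (N2 * E) / (D * E)" using assms by (intro divide_right_mono) auto
  also have "\<dots> = N2 / D" using assms by simp
  finally show ?thesis .
qed

lemma divide_le_divide_mult:
  fixes D E N1 N2 :: real
  assumes "0 < D" "0 < E" "N2 * E \<le> N1"
  shows "N2 / D \<le> N1 / (D * E)"
proof -
  have "N2 / D = (N2 * E) / (D * E)" using assms by simp
  also have "\<dots> \<le> N1 / (D * E)" using assms by (intro divide_right_mono) auto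
  finally show ?thesis .
qed

text \<open>The assumptions on k are the conclusions of matched_types_sandwich for k x the
  Player 2 type matched with x.\<close>

locale sandwiched_matching = AL_game +
  fixes k :: "real \<Rightarrow> real" and J :: "real set" and th :: real
  assumes open_J: "open J" and J_subset_S: "J \<subseteq> S" and th_in_J: "th \<in> J"
    and k_in_S: "\<And>x. x \<in> J \<Longrightarrow> k x \<in> S"
    and k_strict_mono: "\<And>p q. p \<in> J \<Longrightarrow> q \<in> J \<Longrightarrow> p < q \<Longrightarrow> k p < k q"
    and sandwich_upper: "\<And>p q. p \<in> J \<Longrightarrow> q \<in> J \<Longrightarrow> p < q \<Longrightarrow>
        (F q - F p) * k p * (1 - d * F (k q)) \<le> (F (k q) - F (k p)) * (q * (1 - d * F p))"
    and sandwich_lower: "\<And>p q. p \<in> J \<Longrightarrow> q \<in> J \<Longrightarrow> p < q \<Longrightarrow>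
        (F (k q) - F (k p)) * (p * (1 - d * F q)) \<le> (F q - F p) * k q * (1 - d * F (k p))"
begin

definition quot_F :: "real \<Rightarrow> real" where
  "quot_F x = (F x - F th) / (x - th)"

definition quot_Fk :: "real \<Rightarrow> real" where
  "quot_Fk x = (F (k x) - F (k th)) / (x - th)"

definition ratio1 :: "real \<Rightarrow> real" where
  "ratio1 x = k th * (1 - d * F (k x)) / (x * (1 - d * F th))"

definition ratio2 :: "real \<Rightarrow> real" where
  "ratio2 x = k x * (1 - d * F (k th)) / (th * (1 - d * F x))"

definition ratio_limit :: real where
  "ratio_limit = k th * (1 - d * F (k th)) / (th * (1 - d * F th))"

lemma th_in_S: "th \<in> S"
  using J_subset_S th_in_J by blast

lemma J_pos: "x \<in> J \<Longrightarrow> 0 < x"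
  using J_subset_S S_pos by blast

lemma k_pos: "x \<in> J \<Longrightarrow> 0 < k x"
  using k_in_S S_pos by blast

lemma k_neq: "x \<in> J \<Longrightarrow> x \<noteq> th \<Longrightarrow> k x \<noteq> k th"
  using k_strict_mono[OF _ th_in_J] k_strict_mono[OF th_in_J] by (metis less_irrefl linorder_neqE)

lemma eventually_in_J: "eventually (\<lambda>x. x \<in> J \<and> x \<noteq> th) (at th)"
  using eventually_at_in_open[OF open_J th_in_J] by simp

lemma quot_F_pos: "x \<in> J \<Longrightarrow> x \<noteq> th \<Longrightarrow> 0 < quot_F x"
  using F_strict_mono J_subset_S th_in_J
  by (cases x th rule: linorder_cases) (auto simp: quot_F_def divide_neg_neg subset_iff)

lemma quot_Fk_nonneg: "x \<in> J \<Longrightarrow> x \<noteq> th \<Longrightarrow> 0 \<le> quot_Fk x"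
  using F_strict_mono[OF k_in_S k_in_S] k_strict_mono th_in_J
  by (cases x th rule: linorder_cases) (auto simp: quot_Fk_def divide_nonpos_neg less_imp_le)

lemma quot_F_sym: "quot_F x = (F th - F x) / (th - x)"
  unfolding quot_F_def by (metis minus_diff_eq minus_divide_divide)

lemma quot_Fk_sym: "quot_Fk x = (F (k th) - F (k x)) / (th - x)"
  unfolding quot_Fk_def by (metis minus_diff_eq minus_divide_divide)

lemma quot_Fk_bounds_right:
  assumes x: "x \<in> J" "th < x"
  shows "quot_F x * ratio1 x \<le> quot_Fk x" "quot_Fk x \<le> quot_F x * ratio2 x"
proof -
  have D: "0 < x - th" using x by simp
  have E1: "0 < x * (1 - d * F th)" and E2: "0 < th * (1 - d * F x)"
    using J_pos[OF x(1)] J_pos[OF th_in_J] one_minus_dF_pos by simp_all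
  have "quot_F x * ratio1 x
      = ((F x - F th) * k th * (1 - d * F (k x))) / ((x - th) * (x * (1 - d * F th)))"
    unfolding quot_F_def ratio1_def by (simp add: times_divide_times_eq mult.assoc)
  also have "\<dots> \<le> quot_Fk x"
    unfolding quot_Fk_def by (rule divide_mult_le_divide[OF D E1 sandwich_upper[OF th_in_J x]])
  finally show "quot_F x * ratio1 x \<le> quot_Fk x" .
  have "quot_Fk x \<le> ((F x - F th) * k x * (1 - d * F (k th))) / ((x - th) * (th * (1 - d * F x)))"
    unfolding quot_Fk_def by (rule divide_le_divide_mult[OF D E2 sandwich_lower[OF th_in_J x]])
  also have "\<dots> = quot_F x * ratio2 x"
    unfolding quot_F_def ratio2_def by (simp add: times_divide_times_eq mult.assoc)
  finally show "quot_Fk x \<le> quot_F x * ratio2 x" .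
qed

lemma quot_Fk_bounds_left:
  assumes x: "x \<in> J" "x < th"
  shows "quot_F x * ratio2 x \<le> quot_Fk x" "quot_Fk x \<le> quot_F x * ratio1 x"
proof -
  have D: "0 < th - x" using x by simp
  have E1: "0 < x * (1 - d * F th)" and E2: "0 < th * (1 - d * F x)"
    using J_pos[OF x(1)] J_pos[OF th_in_J] one_minus_dF_pos by simp_all
  have "quot_F x * ratio2 x
      = ((F th - F x) * k x * (1 - d * F (k th))) / ((th - x) * (th * (1 - d * F x)))"
    unfolding quot_F_sym ratio2_def by (simp add: times_divide_times_eq mult.assoc)
  also have "\<dots> \<le> quot_Fk x"
    unfolding quot_Fk_sym by (rule divide_mult_le_divide[OF D E2 sandwich_upper[OF x(1) th_in_J x(2)]])
  finally show "quot_F x * ratio2 x \<le> quot_Fk x" .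
  have "quot_Fk x \<le> ((F th - F x) * k th * (1 - d * F (k x))) / ((th - x) * (x * (1 - d * F th)))"
    unfolding quot_Fk_sym by (rule divide_le_divide_mult[OF D E1 sandwich_lower[OF x(1) th_in_J x(2)]])
  also have "\<dots> = quot_F x * ratio1 x"
    unfolding quot_F_sym ratio1_def by (simp add: times_divide_times_eq mult.assoc)
  finally show "quot_Fk x \<le> quot_F x * ratio1 x" .
qed

lemma quot_Fk_bounds:
  assumes x: "x \<in> J" "x \<noteq> th"
  shows "quot_F x * min (ratio1 x) (ratio2 x) \<le> quot_Fk x"
    and "quot_Fk x \<le> quot_F x * max (ratio1 x) (ratio2 x)"
proof -
  have "0 \<le> quot_F x" using quot_F_pos[OF x] by simp
  then have "quot_F x * min (ratio1 x) (ratio2 x) \<le> quot_F x * ratio1 x"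
    "quot_F x * min (ratio1 x) (ratio2 x) \<le> quot_F x * ratio2 x"
    "quot_F x * ratio1 x \<le> quot_F x * max (ratio1 x) (ratio2 x)"
    "quot_F x * ratio2 x \<le> quot_F x * max (ratio1 x) (ratio2 x)"
    by (simp_all add: mult_left_mono)
  moreover have "x < th \<or> th < x" using x(2) by linarith
  ultimately show "quot_F x * min (ratio1 x) (ratio2 x) \<le> quot_Fk x"
    and "quot_Fk x \<le> quot_F x * max (ratio1 x) (ratio2 x)"
    using quot_Fk_bounds_left[OF x(1)] quot_Fk_bounds_right[OF x(1)] by (meson order_trans)+
qed

lemma ratios_bounded:
  obtains C e where "0 < e"
    "\<And>x. x \<in> J \<Longrightarrow> dist x th < e \<Longrightarrow> max (ratio1 x) (ratio2 x) \<le> C"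
proof -
  obtain e where e: "e > 0" "cball th e \<subseteq> J" using open_J th_in_J open_contains_cball by blast
  define p0 q0 where "p0 = th - e" and "q0 = th + e"
  have p0J: "p0 \<in> J" and q0J: "q0 \<in> J" using e by (auto simp: p0_def q0_def dist_real_def)
  have "ratio1 x \<le> k th / (p0 * (1 - d))" "ratio2 x \<le> k q0 / (th * (1 - d))"
    if x: "x \<in> J" "dist x th < e" for x
  proof -
    have xr: "p0 \<le> x" "x \<le> q0" using x(2) by (auto simp: p0_def q0_def dist_real_def)
    show "ratio1 x \<le> k th / (p0 * (1 - d))"
      unfolding ratio1_def
    proof (rule frac_le)
      show "k th * (1 - d * F (k x)) \<le> k th"
        using k_pos[OF th_in_J] F_bounds[of "k x"] d_pos by (simp add: mult_left_le)
      show "p0 * (1 - d) \<le> x * (1 - d * F th)"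
        using xr J_pos[OF p0J] one_minus_d_le d_less_1 by (intro mult_mono) auto
    qed (use k_pos[OF th_in_J] J_pos[OF p0J] d_less_1 in auto)
    have "k x \<le> k q0" using k_strict_mono[OF x(1) q0J] xr by (cases "x = q0") auto
    show "ratio2 x \<le> k q0 / (th * (1 - d))"
      unfolding ratio2_def
    proof (rule frac_le)
      have "k x * (1 - d * F (k th)) \<le> k x"
        using k_pos[OF x(1)] F_bounds[of "k th"] d_pos by (simp add: mult_left_le)
      then show "k x * (1 - d * F (k th)) \<le> k q0" using \<open>k x \<le> k q0\<close> by linarith
      show "th * (1 - d) \<le> th * (1 - d * F x)"
        using J_pos[OF th_in_J] one_minus_d_le by (intro mult_left_mono) auto
    qed (use k_pos[OF q0J] J_pos[OF th_in_J] d_less_1 in auto)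
  qed
  then show ?thesis
    by (intro that[OF e(1), of "max (k th / (p0 * (1 - d))) (k q0 / (th * (1 - d)))"])
      (fastforce intro: max.mono)
qed

lemma F_k_continuous: "((\<lambda>x. F (k x)) \<longlongrightarrow> F (k th)) (at th)"
proof -
  obtain C e where e: "0 < e" and C: "\<And>x. x \<in> J \<Longrightarrow> dist x th < e \<Longrightarrow> max (ratio1 x) (ratio2 x) \<le> C"
    using ratios_bounded by blast
  have bound: "norm (F (k x) - F (k th)) \<le> C * \<bar>F x - F th\<bar>"
    if x: "x \<in> J" "x \<noteq> th" "dist x th < e" for x
  proof -
    have q: "0 < quot_F x" using quot_F_pos[OF x(1,2)] .
    have "quot_Fk x \<le> quot_F x * max (ratio1 x) (ratio2 x)" using quot_Fk_bounds(2)[OF x(1,2)] .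
    also have "\<dots> \<le> quot_F x * C" using C[OF x(1,3)] q by (intro mult_left_mono) auto
    finally have "quot_Fk x * \<bar>x - th\<bar> \<le> quot_F x * C * \<bar>x - th\<bar>" by (intro mult_right_mono) auto
    moreover have "F (k x) - F (k th) = quot_Fk x * (x - th)" "F x - F th = quot_F x * (x - th)"
      using x(2) by (simp_all add: quot_Fk_def quot_F_def)
    ultimately show ?thesis using quot_Fk_nonneg[OF x(1,2)] q by (simp add: abs_mult mult_ac)
  qed
  have "eventually (\<lambda>x. dist x th < e) (at th)" using e by (auto simp: eventually_at)
  then have "eventually (\<lambda>x. norm (F (k x) - F (k th)) \<le> C * \<bar>F x - F th\<bar>) (at th)"
    using eventually_in_J by eventually_elim (use bound in auto)
  moreover have "((\<lambda>x. C * \<bar>F x - F th\<bar>) \<longlongrightarrow> C * \<bar>F th - F th\<bar>) (at th)"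
    using isCont_F[OF th_in_S] unfolding isCont_def by (intro tendsto_intros)
  then have "((\<lambda>x. C * \<bar>F x - F th\<bar>) \<longlongrightarrow> 0) (at th)" by simp
  ultimately have "((\<lambda>x. F (k x) - F (k th)) \<longlongrightarrow> 0) (at th)"
    by (rule Lim_null_comparison)
  then show ?thesis by (simp add: LIM_zero_iff)
qed

text \<open>k is recovered from F \<circ> k through the continuous inverse of F.\<close>

lemma k_continuous: "(k \<longlongrightarrow> k th) (at th)"
proof -
  define y where "y = k th"
  have yS: "y \<in> S" using k_in_S[OF th_in_J] by (simp add: y_def)
  obtain e where e: "e > 0" "cball y e \<subseteq> S" using open_S yS open_contains_cball by blast
  define Finv where "Finv = inv_into S F"
  have Finv_F: "Finv (F z) = z" if "z \<in> S" for z
    unfolding Finv_def using inv_into_f_f[OF inj_on_F that] .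
  have near_S: "z \<in> S" if "\<bar>z - y\<bar> \<le> e" for z
    using e(2) that by (auto simp: dist_real_def subset_iff abs_minus_commute)
  have "isCont Finv (F y)"
    by (rule isCont_inverse_function[where f=F, OF e(1)]) (simp_all add: near_S Finv_F isCont_F)
  then have "((\<lambda>x. Finv (F (k x))) \<longlongrightarrow> y) (at th)"
    using isCont_tendsto_compose F_k_continuous Finv_F[OF yS] unfolding y_def by fastforce
  moreover have "eventually (\<lambda>x. Finv (F (k x)) = k x) (at th)"
    using eventually_in_J by eventually_elim (simp add: Finv_F k_in_S)
  ultimately show ?thesis unfolding y_def by (rule Lim_transform_eventually)
qed

lemma quot_F_tendsto: "(quot_F \<longlongrightarrow> f th) (at th)"
  using F_has_derivative[OF th_in_S] unfolding has_field_derivative_iff quot_F_def[abs_def] .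

lemma ratio1_tendsto: "(ratio1 \<longlongrightarrow> ratio_limit) (at th)"
  unfolding ratio1_def[abs_def] ratio_limit_def
  using J_pos[OF th_in_J] one_minus_dF_pos[of th]
  by (intro tendsto_intros F_k_continuous) auto

lemma ratio2_tendsto: "(ratio2 \<longlongrightarrow> ratio_limit) (at th)"
  unfolding ratio2_def[abs_def] ratio_limit_def
  using J_pos[OF th_in_J] one_minus_dF_pos[of th] isCont_F[OF th_in_S]
  by (intro tendsto_intros k_continuous) (auto simp: isCont_def)

lemma quot_Fk_tendsto: "(quot_Fk \<longlongrightarrow> f th * ratio_limit) (at th)"
proof (rule tendsto_sandwich)
  show "eventually (\<lambda>x. quot_F x * min (ratio1 x) (ratio2 x) \<le> quot_Fk x) (at th)"
    and "eventually (\<lambda>x. quot_Fk x \<le> quot_F x * max (ratio1 x) (ratio2 x)) (at th)"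
    using eventually_in_J by (eventually_elim, use quot_Fk_bounds in auto)+
  show "((\<lambda>x. quot_F x * min (ratio1 x) (ratio2 x)) \<longlongrightarrow> f th * ratio_limit) (at th)"
    using tendsto_mult[OF quot_F_tendsto tendsto_min[OF ratio1_tendsto ratio2_tendsto]] by simp
  show "((\<lambda>x. quot_F x * max (ratio1 x) (ratio2 x)) \<longlongrightarrow> f th * ratio_limit) (at th)"
    using tendsto_mult[OF quot_F_tendsto tendsto_max[OF ratio1_tendsto ratio2_tendsto]] by simp
qed

text \<open>Divide the difference quotient of F \<circ> k by that of F at k th.\<close>

lemma k_has_derivative: "(k has_real_derivative (f th * ratio_limit / f (k th))) (at th)"
proof -
  define y where "y = k th"
  have yS: "y \<in> S" using k_in_S[OF th_in_J] by (simp add: y_def)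
  define R where "R z = (F z - F y) / (z - y)" for z
  have "(R \<longlongrightarrow> f y) (at y)"
    using F_has_derivative[OF yS] unfolding has_field_derivative_iff R_def[abs_def] .
  moreover have "filterlim k (at y) (at th)"
  proof (rule filterlim_atI)
    show "(k \<longlongrightarrow> y) (at th)" using k_continuous by (simp add: y_def)
    show "eventually (\<lambda>x. k x \<noteq> y) (at th)"
      using eventually_in_J by eventually_elim (use k_neq in \<open>auto simp: y_def\<close>)
  qed
  ultimately have "((\<lambda>x. R (k x)) \<longlongrightarrow> f y) (at th)" by (rule filterlim_compose)
  then have "((\<lambda>x. quot_Fk x / R (k x)) \<longlongrightarrow> f th * ratio_limit / f y) (at th)"
    using f_pos yS by (intro tendsto_divide quot_Fk_tendsto) auto
  moreover have "eventually (\<lambda>x. quot_Fk x / R (k x) = (k x - k th) / (x - th)) (at th)"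
    using eventually_in_J
  proof eventually_elim
    case (elim x)
    then have "k x \<noteq> y" using k_neq by (simp add: y_def)
    then have "F (k x) - F y \<noteq> 0" using inj_on_F k_in_S[of x] yS elim by (auto dest: inj_onD)
    then show ?case using \<open>k x \<noteq> y\<close> elim by (simp add: quot_Fk_def R_def y_def)
  qed
  ultimately have "((\<lambda>x. (k x - k th) / (x - th)) \<longlongrightarrow> f th * ratio_limit / f y) (at th)"
    by (rule Lim_transform_eventually)
  then show ?thesis unfolding has_field_derivative_iff y_def .
qed

end

section \<open>Equilibria of the AL game with stopping times in [0, \<infinity>]\<close>

text \<open>enn2real sends \<infinity> to 0; this is harmless because in the AL game a best reply never
  stops at \<infinity> (AL_eq_finite).\<close>

definition real_strategy :: "(real \<Rightarrow> ennreal) \<Rightarrow> real \<Rightarrow> real" where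
  "real_strategy s x = enn2real (s x)"

lemma ennreal_real_strategy: "s x \<noteq> \<infinity> \<Longrightarrow> s x = ennreal (real_strategy s x)"
  by (simp add: real_strategy_def ennreal_enn2real_if)

context AL_game
begin

lemma strategy_real_strategy: "s \<in> borel_measurable borel \<Longrightarrow> strategy (real_strategy s)"
  unfolding strategy_def real_strategy_def by auto

lemma EU_AL_top: "EU_AL lo hi f d s th \<infinity> = - \<infinity>"
proof -
  have "ennreal (1 - d) * \<infinity> = \<infinity>" using d_less_1 by (simp add: ennreal_mult_top)
  then have "(\<integral>\<^sup>+x. (ennreal d * min \<infinity> (s x) + ennreal (1 - d) * \<infinity>) \<partial>M) = \<infinity>"
    using P.emeasure_space_1 by simp
  then show ?thesis by (simp add: EU_AL_def)
qed

lemma AL_best_reply_finite: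
  assumes "\<forall>a. EU_AL lo hi f d s' th a \<le> EU_AL lo hi f d s' th b"
  shows "b \<noteq> \<infinity>"
proof
  assume "b = \<infinity>"
  then have "EU_AL lo hi f d s' th 0 \<le> - \<infinity>" using assms EU_AL_top by metis
  then show False by (simp add: EU_AL_def zero_ennreal.rep_eq)
qed

lemma AL_eq_finite:
  assumes "AL_eq lo hi f d s1 s2" "th \<in> S"
  shows "s1 th = ennreal (real_strategy s1 th)" "s2 th = ennreal (real_strategy s2 th)"
  using assms AL_best_reply_finite ennreal_real_strategy unfolding AL_eq_def is_eq_def by metis+

lemma measure_less_ennreal:
  assumes [measurable]: "s \<in> borel_measurable borel"
    and fin: "\<forall>x\<in>S. s x \<noteq> \<infinity>" and r: "0 \<le> r"
  shows "measure M {x. s x < ennreal r} = prob_before (real_strategy s) r"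
  unfolding prob_before_def
proof (rule measure_eq_on_S)
  show "{x. s x < ennreal r} \<inter> S = {x. real_strategy s x < r} \<inter> S"
    using fin ennreal_real_strategy[of s] r
    by (auto simp: ennreal_less_iff real_strategy_def) (metis ennreal_less_iff enn2real_nonneg)+
qed (auto simp: real_strategy_def)

lemma measure_eq_ennreal:
  assumes [measurable]: "s \<in> borel_measurable borel"
    and fin: "\<forall>x\<in>S. s x \<noteq> \<infinity>" and r: "0 \<le> r"
  shows "measure M {x. s x = ennreal r} = prob_at (real_strategy s) r"
  unfolding prob_at_def
proof (rule measure_eq_on_S)
  show "{x. s x = ennreal r} \<inter> S = {x. real_strategy s x = r} \<inter> S"
    using fin ennreal_real_strategy[of s] r by (auto simp: real_strategy_def)
qed (auto simp: real_strategy_def)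

lemma nn_integral_AL_cost:
  assumes [measurable]: "s \<in> borel_measurable borel"
    and fin: "\<forall>x\<in>S. s x \<noteq> \<infinity>" and r: "0 \<le> r"
  shows "(\<integral>\<^sup>+x. (ennreal d * min (ennreal r) (s x) + ennreal (1 - d) * ennreal r) \<partial>M)
    = ennreal (cost (real_strategy s) r)"
proof -
  have st: "strategy (real_strategy s)" by (rule strategy_real_strategy) simp
  have "(\<integral>\<^sup>+x. (ennreal d * min (ennreal r) (s x) + ennreal (1 - d) * ennreal r) \<partial>M)
      = (\<integral>\<^sup>+x. ennreal (d * min r (real_strategy s x) + (1 - d) * r) \<partial>M)"
    using AE_in_S
  proof (intro nn_integral_cong_AE, eventually_elim)
    case (elim x)
    then have sx: "s x = ennreal (real_strategy s x)" "0 \<le> real_strategy s x"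
      using fin ennreal_real_strategy[of s x] by (auto simp: real_strategy_def)
    then have "min (ennreal r) (s x) = ennreal (min r (real_strategy s x))"
      unfolding sx(1) using r by (auto simp: min_def)
    then show ?case using r d_pos d_less_1
      by (simp add: ennreal_mult[symmetric] ennreal_plus[symmetric] real_strategy_def del: ennreal_plus)
  qed
  also have "\<dots> = ennreal (\<integral>x. d * min r (real_strategy s x) + (1 - d) * r \<partial>M)"
    using integrable_min[OF st r] r d_pos d_less_1 strategy_nonneg[OF st]
    by (intro nn_integral_eq_integral) auto
  also have "(\<integral>x. d * min r (real_strategy s x) + (1 - d) * r \<partial>M) = cost (real_strategy s) r"
    using integrable_min[OF st r] P.prob_space by (simp add: cost_def expected_min_def)
  finally show ?thesis .
qed

lemma EU_AL_eq_payoff: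
  assumes "s \<in> borel_measurable borel" "\<forall>x\<in>S. s x \<noteq> \<infinity>" "0 \<le> r"
  shows "EU_AL lo hi f d s th (ennreal r) = ereal (payoff (real_strategy s) th r)"
proof -
  have "0 \<le> expected_min (real_strategy s) r"
    unfolding expected_min_def using assms(3) by (intro integral_nonneg_AE) (auto simp: real_strategy_def)
  then have "0 \<le> cost (real_strategy s) r"
    using assms(3) d_pos d_less_1 by (simp add: cost_def)
  then show ?thesis
    unfolding EU_AL_def measure_less_ennreal[OF assms] measure_eq_ennreal[OF assms]
      nn_integral_AL_cost[OF assms]
    by (simp add: payoff_def win_prob_def algebra_simps)
qed

lemma AL_best_reply_real:
  assumes s': "s' \<in> borel_measurable borel" "\<forall>x\<in>S. s' x \<noteq> \<infinity>"
    and fin: "\<forall>x\<in>S. s x \<noteq> \<infinity>"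
    and br: "\<forall>th\<in>S. \<forall>a. EU_AL lo hi f d s' th a \<le> EU_AL lo hi f d s' th (s th)"
  shows "best_reply (real_strategy s') (real_strategy s)"
  unfolding best_reply_def
proof (intro ballI allI impI)
  fix th r assume th: "th \<in> S" and r: "0 \<le> (r::real)"
  have "EU_AL lo hi f d s' th (ennreal r) \<le> EU_AL lo hi f d s' th (ennreal (real_strategy s th))"
    using br th ennreal_real_strategy[of s th] fin by metis
  then show "payoff (real_strategy s') th r \<le> payoff (real_strategy s') th (real_strategy s th)"
    using EU_AL_eq_payoff[OF s' r] EU_AL_eq_payoff[OF s', of "real_strategy s th"]
    by (simp add: real_strategy_def)
qed

lemma AL_equilibrium_real_strategy:
  assumes eq: "AL_eq lo hi f d s1 s2"
  shows "AL_equilibrium lo hi f d (real_strategy s1) (real_strategy s2)"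
proof -
  have [measurable]: "s1 \<in> borel_measurable borel" "s2 \<in> borel_measurable borel"
    and br: "\<forall>th\<in>S. \<forall>a. EU_AL lo hi f d s2 th a \<le> EU_AL lo hi f d s2 th (s1 th)"
      "\<forall>th\<in>S. \<forall>a. EU_AL lo hi f d s1 th a \<le> EU_AL lo hi f d s1 th (s2 th)"
    and zero: "measure M {x. s2 x = 0} = 0"
    using eq by (auto simp: AL_eq_def is_eq_def)
  have fin: "\<forall>x\<in>S. s1 x \<noteq> \<infinity>" "\<forall>x\<in>S. s2 x \<noteq> \<infinity>"
    using AL_eq_finite[OF eq] by simp_all
  have "measure M {x. real_strategy s2 x = 0} = measure M {x. s2 x = 0}"
    using measure_eq_ennreal[of s2 0] fin by (simp add: prob_at_def)
  then show ?thesis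
    using strategy_real_strategy AL_best_reply_real[OF _ fin(2,1) br(1)]
      AL_best_reply_real[OF _ fin br(2)] zero
    by unfold_locales auto
qed

end

locale AL_eq_profile = AL_game +
  fixes s1 s2 :: "real \<Rightarrow> ennreal"
  assumes AL_eq: "AL_eq lo hi f d s1 s2"
begin

sublocale R: AL_equilibrium lo hi f d "real_strategy s1" "real_strategy s2"
  by (rule AL_equilibrium_real_strategy[OF AL_eq])

definition active_types :: "real set" where
  "active_types = {x \<in> S. th1 lo hi s1 < ereal x}"

lemma open_active_types: "open active_types"
proof -
  have "active_types = S \<inter> ereal -` {th1 lo hi s1<..}" by (auto simp: active_types_def)
  then show ?thesis using open_S by (simp add: open_Int open_ereal_vimage)
qed

lemma convex_active_types: "convex active_types"
proof -
  have "is_interval active_types"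
    unfolding is_interval_1
  proof (intro ballI allI impI)
    fix a b x assume a: "a \<in> active_types" and b: "b \<in> active_types" and x: "a \<le> x \<and> x \<le> b"
    then have "x \<in> S" using S_between[of a b x] by (simp add: active_types_def)
    moreover have "th1 lo hi s1 < ereal x"
      using a x less_le_trans[of "th1 lo hi s1" "ereal a" "ereal x"] by (simp add: active_types_def)
    ultimately show "x \<in> active_types" by (simp add: active_types_def)
  qed
  then show ?thesis by (simp add: is_interval_convex_1)
qed

lemma active_real_strategy_pos:
  assumes th: "th \<in> active_types"
  shows "0 < real_strategy s1 th"
proof -
  have thS: "th \<in> S" using th by (simp add: active_types_def)
  have "s1 th \<noteq> 0"
  proof
    assume "s1 th = 0"
    then have "ereal th \<in> ereal ` {th \<in> S. s1 th = 0}" using thS by auto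
    then have "ereal th \<le> th1 lo hi s1" unfolding th1_def by (rule Sup_upper)
    then show False using th by (auto simp: active_types_def not_le[symmetric])
  qed
  then have "real_strategy s1 th \<noteq> 0" using AL_eq_finite(1)[OF AL_eq thS] by (metis ennreal_0)
  then show ?thesis using R.rho1_nonneg[of th] by simp
qed

lemma ttf_eq:
  assumes th: "th \<in> S" and y: "y \<in> S" "real_strategy s2 y = real_strategy s1 th"
  shows "ttf lo hi s1 s2 th = y"
proof -
  have "s1 th \<le> s2 x \<longleftrightarrow> y \<le> x" if x: "x \<in> S" for x
  proof -
    have "s1 th \<le> s2 x \<longleftrightarrow> real_strategy s1 th \<le> real_strategy s2 x"
      using AL_eq_finite[OF AL_eq th] AL_eq_finite[OF AL_eq x] R.rho2_nonneg[of x]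
      by (metis ennreal_le_iff)
    also have "\<dots> \<longleftrightarrow> y \<le> x" using R.rho2_le_iff[OF y(1) x] y(2) by simp
    finally show ?thesis .
  qed
  then have "{th' \<in> S. s1 th \<le> s2 th'} = {th' \<in> S. y \<le> th'}" by auto
  moreover have "Inf {th' \<in> S. y \<le> th'} = y" using y(1) by (intro cInf_eq_minimum) auto
  ultimately show ?thesis using th by (simp add: ttf_def)
qed

lemma ttf_matched:
  assumes x: "x \<in> active_types"
  shows "ttf lo hi s1 s2 x \<in> S" "real_strategy s2 (ttf lo hi s1 s2 x) = real_strategy s1 x"
proof -
  have xS: "x \<in> S" using x by (simp add: active_types_def)
  obtain y where "y \<in> S" "real_strategy s2 y = real_strategy s1 x"
    using R.rho1_matched[OF xS active_real_strategy_pos[OF x]] by blast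
  then show "ttf lo hi s1 s2 x \<in> S" "real_strategy s2 (ttf lo hi s1 s2 x) = real_strategy s1 x"
    using ttf_eq[OF xS] by auto
qed

lemma sandwiched_matching_ttf:
  assumes th: "th \<in> active_types"
  shows "sandwiched_matching lo hi f d (ttf lo hi s1 s2) active_types th"
proof
  show "open active_types" by (rule open_active_types)
  show "active_types \<subseteq> S" by (auto simp: active_types_def)
  fix p q assume p: "p \<in> active_types" and q: "q \<in> active_types" and pq: "p < q"
  have pS: "p \<in> S" and qS: "q \<in> S" using p q by (auto simp: active_types_def)
  note sandwich = R.matched_types_sandwich[OF pS qS pq active_real_strategy_pos[OF p]
      ttf_matched[OF p] ttf_matched[OF q]]
  show "(F q - F p) * ttf lo hi s1 s2 p * (1 - d * F (ttf lo hi s1 s2 q))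
      \<le> (F (ttf lo hi s1 s2 q) - F (ttf lo hi s1 s2 p)) * (q * (1 - d * F p))"
    using sandwich(1) .
  show "(F (ttf lo hi s1 s2 q) - F (ttf lo hi s1 s2 p)) * (p * (1 - d * F q))
      \<le> (F q - F p) * ttf lo hi s1 s2 q * (1 - d * F (ttf lo hi s1 s2 p))"
    using sandwich(2) .
  have "real_strategy s1 p < real_strategy s1 q"
    using R.rho1_strict_mono[OF pS qS pq] R.rho1_mono[OF pS qS] pq active_real_strategy_pos[OF p]
    by fastforce
  then show "ttf lo hi s1 s2 p < ttf lo hi s1 s2 q"
    using R.rho2_less_iff ttf_matched[OF p] ttf_matched[OF q] by metis
qed (use th ttf_matched in auto)

lemma ttf_has_derivative:
  assumes th: "th \<in> active_types"
  shows "(ttf lo hi s1 s2 has_real_derivative ode_rhs lo hi f d th (ttf lo hi s1 s2 th)) (at th)"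
proof -
  interpret sandwiched_matching lo hi f d "ttf lo hi s1 s2" active_types th
    by (rule sandwiched_matching_ttf[OF th])
  have "0 < f (ttf lo hi s1 s2 th)" using f_pos k_in_S[OF th] by simp
  then have "f th * ratio_limit / f (ttf lo hi s1 s2 th) = ode_rhs lo hi f d th (ttf lo hi s1 s2 th)"
    using J_pos[OF th] one_minus_dF_pos[of th] one_minus_dF_pos[of "ttf lo hi s1 s2 th"]
    unfolding ratio_limit_def ode_rhs_def by (simp add: field_simps)
  then show ?thesis using k_has_derivative by simp
qed

end

section \<open>The perturbed hazard potential\<close>

context AL_game
begin

definition hazard :: "real \<Rightarrow> real" where
  "hazard x = f x / (x * (1 - d * F x))"

lemma continuous_on_hazard:
  assumes sub: "{a..b} \<subseteq> S"
  shows "continuous_on {a..b} hazard"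
proof -
  have "continuous_on {a..b} f" using continuous_f sub continuous_on_subset by blast
  moreover have "continuous_on {a..b} F"
    using isCont_F sub by (intro continuous_at_imp_continuous_on) auto
  moreover have "\<forall>x\<in>{a..b}. x * (1 - d * F x) \<noteq> 0"
    using sub S_pos one_minus_dF_pos by (metis less_irrefl mult_pos_pos subsetD)
  ultimately show ?thesis unfolding hazard_def
    by (intro continuous_on_divide continuous_on_mult continuous_on_id continuous_on_diff
        continuous_on_const)
qed

lemma Lambda_has_derivative:
  assumes th0: "th0 \<in> S" and z: "z \<in> S"
  shows "(Lambda lo hi f d th0 has_real_derivative hazard z) (at z)"
proof -
  obtain a1 b1 where 1: "a1 \<in> S" "b1 \<in> S" "a1 < th0" "th0 < b1" using S_nbhd[OF th0] by metis
  obtain a2 b2 where 2: "a2 \<in> S" "b2 \<in> S" "a2 < z" "z < b2" using S_nbhd[OF z] by metis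
  define a b where "a = min a1 a2" and "b = max b1 b2"
  have aS: "a \<in> S" and bS: "b \<in> S" using 1 2 by (auto simp: a_def b_def min_def max_def)
  have sub: "{a..b} \<subseteq> S" using S_between[OF aS bS] by auto
  have ord: "a \<le> th0" "th0 \<le> b" "a < z" "z < b" using 1 2 by (auto simp: a_def b_def)
  have "((\<lambda>u. LBINT y=th0..u. hazard y) has_vector_derivative hazard z) (at z within {a..b})"
    by (rule interval_integral_FTC2[OF ord(1,2) continuous_on_hazard[OF sub]]) (use ord in auto)
  then show ?thesis
    using at_within_Icc_at[OF ord(3,4)]
    by (simp add: has_real_derivative_iff_has_vector_derivative Lambda_def[abs_def] hazard_def[abs_def])
qed

end

lemma (in AL_eq_profile) Lambda_ttf_minus_Lambda_const:
  assumes th0: "th0 \<in> S"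
  shows "\<exists>c. \<forall>th\<in>active_types. Lambda lo hi f d th0 (ttf lo hi s1 s2 th) = Lambda lo hi f d th0 th + c"
proof -
  let ?k = "ttf lo hi s1 s2" and ?L = "Lambda lo hi f d th0"
  have "\<exists>c. \<forall>x\<in>active_types. ?L (?k x) - ?L x = c"
  proof (rule has_field_derivative_zero_constant[OF convex_active_types])
    fix x assume x: "x \<in> active_types"
    then have xS: "x \<in> S" and yS: "?k x \<in> S" using ttf_matched(1) by (auto simp: active_types_def)
    have cancel: "fy / (y * B) * (B / A * (y * fx) / (x * fy)) = fx / (x * A)"
      if "fy \<noteq> 0" "y \<noteq> 0" "B \<noteq> 0" for fy fx x y A B :: real
      using that by (simp add: field_simps)
    have "((\<lambda>u. ?L (?k u) - ?L u) has_real_derivative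
        hazard (?k x) * ode_rhs lo hi f d x (?k x) - hazard x) (at x)"
      by (intro DERIV_diff DERIV_chain2[OF _ ttf_has_derivative[OF x], OF Lambda_has_derivative[OF th0 yS]]
          Lambda_has_derivative[OF th0 xS])
    moreover have "hazard (?k x) * ode_rhs lo hi f d x (?k x) = hazard x"
      unfolding hazard_def ode_rhs_def
      by (rule cancel) (use f_pos yS S_pos[OF yS] one_minus_dF_pos[of "?k x"] in auto)
    ultimately show "((\<lambda>u. ?L (?k u) - ?L u) has_field_derivative 0) (at x within active_types)"
      by (simp add: has_field_derivative_at_within)
  qed
  then show ?thesis by (metis add.commute diff_eq_eq)
qed

section \<open>Rescaling stopping times\<close>

lemma ennreal_scale_le_iff: "0 < c \<Longrightarrow> ennreal c * u \<le> ennreal c * v \<longleftrightarrow> u \<le> v"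
  by (rule ennreal_mult_le_mult_iff) auto

lemma ennreal_scale_less_iff: "0 < c \<Longrightarrow> ennreal c * u < ennreal c * v \<longleftrightarrow> u < v"
  using ennreal_scale_le_iff[of c v u] by (simp add: not_le[symmetric])

lemma ennreal_scale_eq_iff: "0 < c \<Longrightarrow> ennreal c * u = ennreal c * v \<longleftrightarrow> u = v"
  using ennreal_scale_le_iff[of c u v] ennreal_scale_le_iff[of c v u] by (auto intro: antisym)

lemma ennreal_scale_eq_0_iff: "0 < c \<Longrightarrow> ennreal c * u = 0 \<longleftrightarrow> u = 0"
  using ennreal_scale_eq_iff[of c u 0] by simp

lemma min_ennreal_scale: "0 < c \<Longrightarrow> min (ennreal c * u) (ennreal c * v) = ennreal c * min u v"
  using ennreal_scale_le_iff[of c u v] by (auto simp: min_def)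

lemma ennreal_scale_inverse: "0 < c \<Longrightarrow> ennreal c * (ennreal (1 / c) * u) = u"
  by (simp add: mult.assoc[symmetric] ennreal_mult[symmetric])

lemma ereal_scale_diff_enn2ereal:
  assumes "0 < c"
  shows "ereal c * (ereal X - enn2ereal C) = ereal (c * X) - enn2ereal (ennreal c * C)"
proof (cases C)
  case (real y)
  then show ?thesis using assms by (simp add: ennreal_mult[symmetric] algebra_simps)
qed (use assms in \<open>simp add: ennreal_mult_top\<close>)

context type_distribution
begin

lemma EU_BT_scale:
  assumes d: "0 < d" "d < 1" and [measurable]: "s \<in> borel_measurable borel"
  shows "EU_BT lo hi f (1 - d) (\<lambda>x. ennreal d * s x) th (ennreal d * a)
    = ereal d * EU_AL lo hi f d s th a"
proof -
  define I where "I = (\<integral>\<^sup>+x. min a (s x) \<partial>M)"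
  define X where "X = th * measure M {x. s x < a} + th / 2 * measure M {x. s x = a}"
  define C where "C = ennreal d * I + ennreal (1 - d) * a"
  have "(\<integral>\<^sup>+x. min (ennreal d * a) (ennreal d * s x) \<partial>M) = ennreal d * I"
    unfolding I_def min_ennreal_scale[OF d(1)] by (rule nn_integral_cmult) measurable
  moreover have "{x. ennreal d * s x < ennreal d * a} = {x. s x < a}"
    and "{x. ennreal d * s x = ennreal d * a} = {x. s x = a}"
    using ennreal_scale_less_iff[OF d(1)] ennreal_scale_eq_iff[OF d(1)] by simp_all
  moreover have "ennreal (1 - (1 - d)) * (ennreal d * I) + ennreal (1 - d) * (ennreal d * a)
      = ennreal d * C"
    by (simp add: C_def algebra_simps)
  ultimately have BT: "EU_BT lo hi f (1 - d) (\<lambda>x. ennreal d * s x) th (ennreal d * a)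
      = ereal (d * X + (if ennreal d * a = \<infinity> then (1 - d) * (th / 2) else 0))
        - enn2ereal (ennreal d * C)"
    unfolding EU_BT_def X_def by simp
  have "(\<integral>\<^sup>+x. (ennreal d * min a (s x) + ennreal (1 - d) * a) \<partial>M) = C"
    unfolding C_def I_def using P.emeasure_space_1
    by (subst nn_integral_add) (auto simp: nn_integral_cmult nn_integral_const)
  then have AL: "EU_AL lo hi f d s th a = ereal X - enn2ereal C"
    unfolding EU_AL_def X_def by simp
  show ?thesis
  proof (cases "a = \<infinity>")
    case True
    then have "C = \<infinity>" using d by (simp add: C_def ennreal_mult_top)
    then show ?thesis unfolding BT AL using d by (simp add: ennreal_mult_top)
  next
    case False
    then have "ennreal d * a \<noteq> \<infinity>" using d(1) by (simp add: ennreal_mult_eq_top_iff)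
    then show ?thesis unfolding BT AL ereal_scale_diff_enn2ereal[OF d(1)] by simp
  qed
qed

lemma BT_best_reply_scale_iff:
  assumes d: "0 < d" "d < 1" and s: "s' \<in> borel_measurable borel"
  shows "(\<forall>a. EU_BT lo hi f (1 - d) (\<lambda>x. ennreal d * s' x) th a
              \<le> EU_BT lo hi f (1 - d) (\<lambda>x. ennreal d * s' x) th (ennreal d * b))
    \<longleftrightarrow> (\<forall>a. EU_AL lo hi f d s' th a \<le> EU_AL lo hi f d s' th b)"
proof -
  have "(\<forall>a. EU_BT lo hi f (1 - d) (\<lambda>x. ennreal d * s' x) th a
              \<le> EU_BT lo hi f (1 - d) (\<lambda>x. ennreal d * s' x) th (ennreal d * b))
    \<longleftrightarrow> (\<forall>a. EU_BT lo hi f (1 - d) (\<lambda>x. ennreal d * s' x) th (ennreal d * a)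
              \<le> EU_BT lo hi f (1 - d) (\<lambda>x. ennreal d * s' x) th (ennreal d * b))"
    by (metis ennreal_scale_inverse[OF d(1)])
  also have "\<dots> \<longleftrightarrow> (\<forall>a. EU_AL lo hi f d s' th a \<le> EU_AL lo hi f d s' th b)"
    unfolding EU_BT_scale[OF d s] using d(1) by (simp add: ereal_mult_le_mult_iff)
  finally show ?thesis .
qed

lemma measurable_ennreal_scale_iff:
  assumes "0 < c"
  shows "(\<lambda>x. ennreal c * s x) \<in> borel_measurable borel \<longleftrightarrow> s \<in> borel_measurable borel"
proof
  assume "(\<lambda>x. ennreal c * s x) \<in> borel_measurable borel"
  then have "(\<lambda>x. ennreal (1 / c) * (ennreal c * s x)) \<in> borel_measurable borel" by measurable
  then show "s \<in> borel_measurable borel"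
    using ennreal_scale_inverse[of "1 / c"] assms by simp
qed measurable

lemma AL_eq_iff_BT_eq_scale:
  assumes d: "0 < d" "d < 1"
  shows "AL_eq lo hi f d s1 s2
    \<longleftrightarrow> BT_eq lo hi f (1 - d) (\<lambda>x. ennreal d * s1 x) (\<lambda>x. ennreal d * s2 x)"
  unfolding AL_eq_def BT_eq_def is_eq_def measurable_ennreal_scale_iff[OF d(1)]
    ennreal_scale_eq_0_iff[OF d(1)]
  using BT_best_reply_scale_iff[OF d, of s2] BT_best_reply_scale_iff[OF d, of s1] by blast

lemma ttf_scale: "0 < c \<Longrightarrow> ttf lo hi (\<lambda>x. ennreal c * s1 x) (\<lambda>x. ennreal c * s2 x) = ttf lo hi s1 s2"
  unfolding ttf_def using ennreal_scale_le_iff[of c] by presburger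

lemma th1_scale: "0 < c \<Longrightarrow> th1 lo hi (\<lambda>x. ennreal c * s1 x) = th1 lo hi s1"
  unfolding th1_def using ennreal_scale_eq_0_iff[of c] by presburger

lemma BT_eq_imp_AL_eq_scale:
  assumes d: "0 < d" "d < 1" and eq: "BT_eq lo hi f (1 - d) s1 s2"
  shows "AL_eq lo hi f d (\<lambda>x. ennreal (1 / d) * s1 x) (\<lambda>x. ennreal (1 / d) * s2 x)"
  using AL_eq_iff_BT_eq_scale[OF d] eq by (simp add: ennreal_scale_inverse[OF d(1)])

lemma E_AL_eq_E_BT:
  assumes d: "0 < d" "d < 1"
  shows "E_AL lo hi f d = E_BT lo hi f (1 - d)"
proof (intro set_eqI iffI)
  fix k assume "k \<in> E_AL lo hi f d"
  then obtain s1 s2 where k: "k = ttf lo hi s1 s2" and eq: "AL_eq lo hi f d s1 s2"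
    by (auto simp: E_AL_def)
  have "BT_eq lo hi f (1 - d) (\<lambda>x. ennreal d * s1 x) (\<lambda>x. ennreal d * s2 x)"
    using eq AL_eq_iff_BT_eq_scale[OF d] by simp
  moreover have "k = ttf lo hi (\<lambda>x. ennreal d * s1 x) (\<lambda>x. ennreal d * s2 x)"
    using k ttf_scale[OF d(1)] by simp
  ultimately show "k \<in> E_BT lo hi f (1 - d)" unfolding E_BT_def by blast
next
  fix k assume "k \<in> E_BT lo hi f (1 - d)"
  then obtain s1 s2 where k: "k = ttf lo hi s1 s2" and eq: "BT_eq lo hi f (1 - d) s1 s2"
    by (auto simp: E_BT_def)
  have "k = ttf lo hi (\<lambda>x. ennreal (1 / d) * s1 x) (\<lambda>x. ennreal (1 / d) * s2 x)"
    using ttf_scale[of d "\<lambda>x. ennreal (1 / d) * s1 x" "\<lambda>x. ennreal (1 / d) * s2 x"] d k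
    by (simp add: ennreal_scale_inverse)
  then show "k \<in> E_AL lo hi f d"
    using BT_eq_imp_AL_eq_scale[OF d eq] unfolding E_AL_def by blast
qed

lemma ucc_shift: "ucc S kn k \<Longrightarrow> ucc S (\<lambda>n. kn (n + N)) k"
  unfolding ucc_def by (auto intro: filterlim_compose filterlim_add_const_nat_at_top)

lemma AL_selection_subset_BT_selection: "AL_selection lo hi f \<subseteq> BT_selection lo hi f"
proof
  fix k assume "k \<in> AL_selection lo hi f"
  then obtain d kn where A: "\<forall>n. 0 \<le> d n \<and> d n < 1 \<and> kn n \<in> E_AL lo hi f (d n)"
    and lim: "d \<longlonglongrightarrow> 1" and u: "ucc S kn k" by (auto simp: AL_selection_def)
  obtain N where N: "\<And>n. n \<ge> N \<Longrightarrow> 0 < d n"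
    using order_tendstoD(1)[OF lim, of 0] by (auto simp: eventually_sequentially)
  define e where "e n = 1 - d (n + N)" for n
  define kn' where "kn' n = kn (n + N)" for n
  have "0 < e n \<and> e n < 1 \<and> kn' n \<in> E_BT lo hi f (e n)" for n
  proof -
    have dn: "0 < d (n + N)" "d (n + N) < 1" using N[of "n + N"] A by auto
    then show ?thesis using A[rule_format, of "n + N"] E_AL_eq_E_BT[OF dn] by (simp add: e_def kn'_def)
  qed
  moreover have "e \<longlonglongrightarrow> 0"
    using tendsto_diff[OF tendsto_const LIMSEQ_ignore_initial_segment[OF lim, of N], of 1]
    by (simp add: e_def[abs_def])
  moreover have "ucc S kn' k" using ucc_shift[OF u] by (simp add: kn'_def[abs_def])
  ultimately show "k \<in> BT_selection lo hi f" unfolding BT_selection_def by blast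
qed

lemma BT_selection_subset_AL_selection: "BT_selection lo hi f \<subseteq> AL_selection lo hi f"
proof
  fix k assume "k \<in> BT_selection lo hi f"
  then obtain e kn where A: "\<forall>n. 0 < e n \<and> e n < 1 \<and> kn n \<in> E_BT lo hi f (e n)"
    and lim: "e \<longlonglongrightarrow> 0" and u: "ucc S kn k" by (auto simp: BT_selection_def)
  define d where "d n = 1 - e n" for n
  have "0 \<le> d n \<and> d n < 1 \<and> kn n \<in> E_AL lo hi f (d n)" for n
    using A[rule_format, of n] E_AL_eq_E_BT[of "d n"] by (simp add: d_def)
  moreover have "d \<longlonglongrightarrow> 1"
    using tendsto_diff[OF tendsto_const lim, of 1] by (simp add: d_def[abs_def])
  ultimately show "k \<in> AL_selection lo hi f" unfolding AL_selection_def using u by blast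
qed

lemma AL_eq_profileI:
  "0 < d \<Longrightarrow> d < 1 \<Longrightarrow> AL_eq lo hi f d s1 s2 \<Longrightarrow> AL_eq_profile lo hi f d s1 s2"
  by (simp add: AL_eq_profile_def AL_eq_profile_axioms_def AL_game_def AL_game_axioms_def
      type_distribution_axioms)

lemma ttf_has_derivative_AL:
  assumes d: "0 < d" "d < 1" and eq: "AL_eq lo hi f d s1 s2"
    and th: "th \<in> S" "th1 lo hi s1 < ereal th"
  shows "(ttf lo hi s1 s2 has_real_derivative ode_rhs lo hi f d th (ttf lo hi s1 s2 th)) (at th)"
proof -
  interpret AL_eq_profile lo hi f d s1 s2 by (rule AL_eq_profileI[OF d eq])
  show ?thesis using ttf_has_derivative th by (simp add: active_types_def)
qed

lemma ttf_BT:
  assumes e: "0 < e" "e < 1" and eq: "BT_eq lo hi f e s1 s2"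
  shows "(\<forall>th\<in>S. th1 lo hi s1 < ereal th \<longrightarrow>
           (ttf lo hi s1 s2 has_real_derivative ode_rhs lo hi f (1 - e) th (ttf lo hi s1 s2 th)) (at th))
    \<and> (\<forall>th0\<in>S. \<exists>c. \<forall>th\<in>S. th1 lo hi s1 < ereal th \<longrightarrow>
           Lambda lo hi f (1 - e) th0 (ttf lo hi s1 s2 th) = Lambda lo hi f (1 - e) th0 th + c)"
proof -
  define d where "d = 1 - e"
  have d: "0 < d" "d < 1" and eq': "BT_eq lo hi f (1 - d) s1 s2" and e_eq: "e = 1 - d"
    using e eq by (auto simp: d_def)
  interpret AL_eq_profile lo hi f d "\<lambda>x. ennreal (1 / d) * s1 x" "\<lambda>x. ennreal (1 / d) * s2 x"
    by (rule AL_eq_profileI[OF d BT_eq_imp_AL_eq_scale[OF d eq']])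
  have "ttf lo hi (\<lambda>x. ennreal (1 / d) * s1 x) (\<lambda>x. ennreal (1 / d) * s2 x) = ttf lo hi s1 s2"
    and "th1 lo hi (\<lambda>x. ennreal (1 / d) * s1 x) = th1 lo hi s1"
    using d ttf_scale th1_scale by simp_all
  then show ?thesis
    unfolding e_eq using ttf_has_derivative Lambda_ttf_minus_Lambda_const
    by (simp add: active_types_def) blast
qed

end

theorem proposition2:
  fixes lo :: real and hi :: ereal and f :: "real \<Rightarrow> real"
  assumes "0 \<le> lo" and "ereal lo < hi"
    and "continuous_on (supp lo hi) f"
    and "\<forall>x\<in>supp lo hi. 0 < f x"
    and "prob_space (distF lo hi f)"
  shows
    \<comment> \<open>(i) ODE in the behavioural-types game (with d = 1 - e), the same ODE in the AL game,
        and the associated perturbed hazard potential\<close>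
    "(\<forall>e s1 s2. 0 < e \<and> e < 1 \<and> BT_eq lo hi f e s1 s2 \<longrightarrow>
        (\<forall>th\<in>supp lo hi. th1 lo hi s1 < ereal th \<longrightarrow>
           (ttf lo hi s1 s2 has_real_derivative
              ode_rhs lo hi f (1 - e) th (ttf lo hi s1 s2 th)) (at th)) \<and>
        (\<forall>th0\<in>supp lo hi. \<exists>c. \<forall>th\<in>supp lo hi. th1 lo hi s1 < ereal th \<longrightarrow>
           Lambda lo hi f (1 - e) th0 (ttf lo hi s1 s2 th) = Lambda lo hi f (1 - e) th0 th + c))
     \<and> (\<forall>d s1 s2. 0 < d \<and> d < 1 \<and> AL_eq lo hi f d s1 s2 \<longrightarrow>
        (\<forall>th\<in>supp lo hi. th1 lo hi s1 < ereal th \<longrightarrow>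
           (ttf lo hi s1 s2 has_real_derivative
              ode_rhs lo hi f d th (ttf lo hi s1 s2 th)) (at th)))
     \<comment> \<open>(ii)\<close>
     \<and> (\<forall>d. 0 < d \<and> d < 1 \<longrightarrow> E_AL lo hi f d = E_BT lo hi f (1 - d))
     \<comment> \<open>(iii)\<close>
     \<and> AL_selection lo hi f = BT_selection lo hi f"
proof -
  interpret type_distribution lo hi f
    using assms by (simp add: type_distribution_def)
  show ?thesis
    using ttf_BT ttf_has_derivative_AL E_AL_eq_E_BT
      subset_antisym[OF AL_selection_subset_BT_selection BT_selection_subset_AL_selection]
    by blast
qed

end
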